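(* Let $d\ge1$, $0<c\le\infty$, $X=(0,c)$, $X_{\mathrm{SYM}}=(-c,0)\cup(0,c)$, $\mathbb{X}=(X_{\mathrm{SYM}})^d$. For $i=1,\dots,d$ let $w_i\in C^2(X)$ be strictly positive, $p_i\in C^2(X)$ real-valued and nonvanishing, $q_i\in C^1(X)$ real-valued, $a_i\ge0$ constants, $A=\sum_ia_i$, $\mu_i(dx)=w_i(x)dx$ on $X$, $\delta_i=p_i\frac{d}{dx}+q_i$, $\delta_i^*=-p_i\frac{d}{dx}+q_i-p_i\frac{w_i'}{w_i}-p_i'$, $L_i=a_i+\delta_i^*\delta_i$. Assume for each $i$ there is an orthonormal basis $\{\varphi^{(i)}_k:k\in\mathbb{N}\}$ of $L^2(X,\mu_i)$ with $\varphi^{(i)}_k\in C^\infty(X)$, $L_i\varphi^{(i)}_k=\lambda^{(i)}_k\varphi^{(i)}_k$, $\lambda^{(i)}_0<\lambda^{(i)}_1<\dots\to\infty$, $\delta_i\varphi^{(i)}_k\in L^2(X,\mu_i)$ and $\langle\delta_i\varphi^{(i)}_k,\delta_i\varphi^{(i)}_m\rangle_{\mu_i}=\langle\delta_i^*\delta_i\varphi^{(i)}_k,\varphi^{(i)}_m\rangle_{\mu_i}$ for all $k,m$; assume moreover $a_i=\lambda^{(i)}_0$ for every $i$. Extend $w_i,p_i,\varphi^{(i)}_k$ evenly and $q_i$ oddly to $X_{\mathrm{SYM}}$, let $\mu(dx)=w_1(x_1)\cdots w_d(x_d)dx$ on $\mathbb{X}$, define $\Phi^{(i)}_n=\frac1{\sqrt2}\varphi^{(i)}_{n/2}$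 for even $n$, $\Phi^{(i)}_n=-\frac1{\sqrt2}(\lambda^{(i)}_{(n+1)/2}-a_i)^{-1/2}\delta_i\varphi^{(i)}_{(n+1)/2}$ for odd $n$, $\Phi_n=\Phi^{(1)}_{n_1}\otimes\cdots\otimes\Phi^{(d)}_{n_d}$ and $\lambda_{\langle n\rangle}=\sum_{i=1}^d\lambda^{(i)}_{\lfloor(n_i+1)/2\rfloor}$ for $n\in\mathbb{N}^d$. Let $$D_jf(x)=p_j(x_j)\partial_{x_j}f(x)+q_j(x_j)\tfrac{f(x)+f(\sigma_jx)}{2}+\Big[p_j(x_j)\tfrac{w_j'(x_j)}{w_j(x_j)}+p_j'(x_j)-q_j(x_j)\Big]\tfrac{f(x)-f(\sigma_jx)}{2},\qquad\mathbb{L}=A-\sum_{i=1}^dD_i^2,$$ ($\sigma_j$ the reflection changing the sign of the $j$th coordinate). Let $\mathfrak{L}f=\sum_{n}\lambda_{\langle n\rangle}\langle f,\Phi_n\rangle_\mu\Phi_n$ with domain $\{f\in L^2(\mathbb{X},\mu):\sum_n|\lambda_{\langle n\rangle}\langle f,\Phi_n\rangle_\mu|^2<\infty\}$ (a nonnegative self-adjoint operator), let $\Pi_0$ be the orthogonal projection onto the closed span of $\{\Phi_n:\lambda_{\langle n\rangle}\neq0\}$, $\mathfrak{L}^{-1}\Pi_0f=\sum_{\lambda_{\langle n\rangle}\neq0}\lambda_{\langle n\rangle}^{-1}\langle f,\Phi_n\rangle_\mu\Phi_n$, $P_t=\exp(-t\mathfrak{L}^{1/2})$ ($t\ge0$,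 spectral calculus), $R_jf=\sum_{\lambda_{\langle n\rangle}\neq0}\lambda_{\langle n\rangle}^{-1/2}\langle f,\Phi_n\rangle_\mu D_j\Phi_n$ and $U^j_tf=P_tR_jf$. Let $f$ belong to the linear span of $\{\Phi_n:n\in\mathbb{N}^d\}$. Then for $t\ge0$ (derivatives in $t$ for $t>0$): (i) $D_iU^j_tf=D_jU^i_tf$ for $i,j=1,\dots,d$; (ii) $D_jP_tf=-\frac{\partial}{\partial t}U^j_tf$ for $j=1,\dots,d$; (iii) if $A=0$, then $\sum_{j=1}^dD_jU^j_tf=\frac{\partial}{\partial t}P_tf$; if $A>0$, then $\sum_{j=1}^dD_jU^j_tf=\frac{\partial}{\partial t}P_t\big(f-A\mathfrak{L}^{-1}\Pi_0f\big)$; (iv) $\big(\frac{\partial^2}{\partial t^2}-\mathbb{L}\big)P_tf=0$ and $\big(\frac{\partial^2}{\partial t^2}-\mathbb{L}\big)U^j_tf=0$ for $j=1,\dots,d$.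
   Context: $\mathbb{N}=\{0,1,2,\dots\}$; $\langle\cdot,\cdot\rangle_\mu$ is the inner product of $L^2(\mathbb{X},\mu)$; $\lfloor\cdot\rfloor$ is the floor function. *)

theory Defs
  imports "HOL-Analysis.Analysis"
begin

definition C1_on :: "real set \<Rightarrow> (real \<Rightarrow> real) \<Rightarrow> bool" where
  "C1_on S f \<longleftrightarrow> (\<forall>x\<in>S. f field_differentiable (at x)) \<and> continuous_on S (deriv f)"

definition C2_on :: "real set \<Rightarrow> (real \<Rightarrow> real) \<Rightarrow> bool" where
  "C2_on S f \<longleftrightarrow> C1_on S f \<and> C1_on S (deriv f)"

definition Cinf_on :: "real set \<Rightarrow> (real \<Rightarrow> real) \<Rightarrow> bool" where
  "Cinf_on S f \<longleftrightarrow> (\<forall>k. \<forall>x\<in>S. ((deriv ^^ k) f) field_differentiable (at x))"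

text \<open>X = (0,c), X_SYM = (-c,0) \<union> (0,c), and the d-fold product (points are
  extensional functions on the index set {..<d}, coordinates indexed 0..d-1).\<close>

definition Xint :: "ereal \<Rightarrow> real set" where
  "Xint c = {x. 0 < x \<and> ereal x < c}"

definition Xsym :: "ereal \<Rightarrow> real set" where
  "Xsym c = {x. x \<noteq> 0 \<and> ereal \<bar>x\<bar> < c}"

definition Xd :: "ereal \<Rightarrow> nat \<Rightarrow> (nat \<Rightarrow> real) set" where
  "Xd c d = ({..<d} \<rightarrow>\<^sub>E Xsym c)"

definition Nd :: "nat \<Rightarrow> (nat \<Rightarrow> nat) set" where
  "Nd d = ({..<d} \<rightarrow>\<^sub>E (UNIV :: nat set))"

definition L2 :: "'a measure \<Rightarrow> ('a \<Rightarrow> real) \<Rightarrow> bool" where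
  "L2 M f \<longleftrightarrow> f \<in> borel_measurable M \<and> integrable M (\<lambda>x. (f x)\<^sup>2)"

definition ip :: "'a measure \<Rightarrow> ('a \<Rightarrow> real) \<Rightarrow> ('a \<Rightarrow> real) \<Rightarrow> real" where
  "ip M f g = (\<integral>x. f x * g x \<partial>M)"

definition ONB :: "'a measure \<Rightarrow> (nat \<Rightarrow> 'a \<Rightarrow> real) \<Rightarrow> bool" where
  "ONB M \<phi> \<longleftrightarrow> (\<forall>k. L2 M (\<phi> k)) \<and>
     (\<forall>k m. ip M (\<phi> k) (\<phi> m) = (if k = m then 1 else 0)) \<and>
     (\<forall>f. L2 M f \<and> (\<forall>k. ip M f (\<phi> k) = 0) \<longrightarrow> (AE x in M. f x = 0))"

definition mu1 :: "ereal \<Rightarrow> (real \<Rightarrow> real) \<Rightarrow> real measure" where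
  "mu1 c w = density (restrict_space lborel (Xint c)) (\<lambda>x. ennreal (w x))"

definition delta :: "(real \<Rightarrow> real) \<Rightarrow> (real \<Rightarrow> real) \<Rightarrow> (real \<Rightarrow> real) \<Rightarrow> real \<Rightarrow> real" where
  "delta p q g x = p x * deriv g x + q x * g x"

definition deltastar :: "(real \<Rightarrow> real) \<Rightarrow> (real \<Rightarrow> real) \<Rightarrow> (real \<Rightarrow> real) \<Rightarrow> (real \<Rightarrow> real) \<Rightarrow> real \<Rightarrow> real" where
  "deltastar w p q g x = - p x * deriv g x + q x * g x - p x * (deriv w x / w x) * g x - deriv p x * g x"

definition Lop :: "(real \<Rightarrow> real) \<Rightarrow> (real \<Rightarrow> real) \<Rightarrow> (real \<Rightarrow> real) \<Rightarrow> real \<Rightarrow> (real \<Rightarrow> real) \<Rightarrow> real \<Rightarrow> real" where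
  "Lop w p q a g x = a * g x + deltastar w p q (delta p q g) x"

definition evenext :: "(real \<Rightarrow> real) \<Rightarrow> real \<Rightarrow> real" where
  "evenext g x = g \<bar>x\<bar>"

definition oddext :: "(real \<Rightarrow> real) \<Rightarrow> real \<Rightarrow> real" where
  "oddext g x = sgn x * g \<bar>x\<bar>"

definition Phi1 :: "(real \<Rightarrow> real) \<Rightarrow> (real \<Rightarrow> real) \<Rightarrow> real \<Rightarrow> (nat \<Rightarrow> real \<Rightarrow> real)
                    \<Rightarrow> (nat \<Rightarrow> real) \<Rightarrow> nat \<Rightarrow> real \<Rightarrow> real" where
  "Phi1 p q a phi lam n x =
     (if even n then (1 / sqrt 2) * evenext (phi (n div 2)) x
      else - (1 / sqrt 2) * (lam ((n + 1) div 2) - a) powr (-1/2)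
             * delta (evenext p) (oddext q) (evenext (phi ((n + 1) div 2))) x)"

definition PhiD :: "nat \<Rightarrow> (nat \<Rightarrow> real \<Rightarrow> real) \<Rightarrow> (nat \<Rightarrow> real \<Rightarrow> real) \<Rightarrow> (nat \<Rightarrow> real)
                    \<Rightarrow> (nat \<Rightarrow> nat \<Rightarrow> real \<Rightarrow> real) \<Rightarrow> (nat \<Rightarrow> nat \<Rightarrow> real)
                    \<Rightarrow> (nat \<Rightarrow> nat) \<Rightarrow> (nat \<Rightarrow> real) \<Rightarrow> real" where
  "PhiD d p q a phi lam n x = (\<Prod>i<d. Phi1 (p i) (q i) (a i) (phi i) (lam i) (n i) (x i))"

definition lamD :: "nat \<Rightarrow> (nat \<Rightarrow> nat \<Rightarrow> real) \<Rightarrow> (nat \<Rightarrow> nat) \<Rightarrow> real" where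
  "lamD d lam n = (\<Sum>i<d. lam i ((n i + 1) div 2))"

definition muD :: "ereal \<Rightarrow> nat \<Rightarrow> (nat \<Rightarrow> real \<Rightarrow> real) \<Rightarrow> (nat \<Rightarrow> real) measure" where
  "muD c d w = density (restrict_space (PiM {..<d} (\<lambda>_. lborel)) (Xd c d))
                 (\<lambda>x. ennreal (\<Prod>i<d. evenext (w i) (x i)))"

definition partialD :: "nat \<Rightarrow> ((nat \<Rightarrow> real) \<Rightarrow> real) \<Rightarrow> (nat \<Rightarrow> real) \<Rightarrow> real" where
  "partialD j f x = deriv (\<lambda>s. f (x(j := s))) (x j)"

definition sigma :: "nat \<Rightarrow> (nat \<Rightarrow> real) \<Rightarrow> (nat \<Rightarrow> real)" where
  "sigma j x = x(j := - x j)"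

definition DD :: "(nat \<Rightarrow> real \<Rightarrow> real) \<Rightarrow> (nat \<Rightarrow> real \<Rightarrow> real) \<Rightarrow> (nat \<Rightarrow> real \<Rightarrow> real)
                  \<Rightarrow> nat \<Rightarrow> ((nat \<Rightarrow> real) \<Rightarrow> real) \<Rightarrow> (nat \<Rightarrow> real) \<Rightarrow> real" where
  "DD w p q j f x =
     evenext (p j) (x j) * partialD j f x
     + oddext (q j) (x j) * ((f x + f (sigma j x)) / 2)
     + (evenext (p j) (x j) * (deriv (evenext (w j)) (x j) / evenext (w j) (x j))
        + deriv (evenext (p j)) (x j) - oddext (q j) (x j)) * ((f x - f (sigma j x)) / 2)"

definition LLop :: "nat \<Rightarrow> (nat \<Rightarrow> real \<Rightarrow> real) \<Rightarrow> (nat \<Rightarrow> real \<Rightarrow> real) \<Rightarrow> (nat \<Rightarrow> real \<Rightarrow> real)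
                    \<Rightarrow> real \<Rightarrow> ((nat \<Rightarrow> real) \<Rightarrow> real) \<Rightarrow> (nat \<Rightarrow> real) \<Rightarrow> real" where
  "LLop d w p q A f x = A * f x - (\<Sum>i<d. DD w p q i (DD w p q i f) x)"

text \<open>Spectral-calculus operators, given by their eigenfunction expansions
  (pointwise, as set-indexed sums).\<close>

definition coef :: "'a measure \<Rightarrow> ('b \<Rightarrow> 'a \<Rightarrow> real) \<Rightarrow> ('a \<Rightarrow> real) \<Rightarrow> 'b \<Rightarrow> real" where
  "coef M \<Phi> f n = ip M f (\<Phi> n)"

definition Pop :: "'a measure \<Rightarrow> 'b set \<Rightarrow> ('b \<Rightarrow> 'a \<Rightarrow> real) \<Rightarrow> ('b \<Rightarrow> real)
                   \<Rightarrow> real \<Rightarrow> ('a \<Rightarrow> real) \<Rightarrow> 'a \<Rightarrow> real" where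
  "Pop M N \<Phi> L t f x = (\<Sum>\<^sub>\<infinity>n\<in>N. exp (- t * sqrt (L n)) * coef M \<Phi> f n * \<Phi> n x)"

definition Rop :: "'a measure \<Rightarrow> 'b set \<Rightarrow> ('b \<Rightarrow> 'a \<Rightarrow> real) \<Rightarrow> ('b \<Rightarrow> real)
                   \<Rightarrow> (('a \<Rightarrow> real) \<Rightarrow> 'a \<Rightarrow> real) \<Rightarrow> ('a \<Rightarrow> real) \<Rightarrow> 'a \<Rightarrow> real" where
  "Rop M N \<Phi> L D f x = (\<Sum>\<^sub>\<infinity>n\<in>{n\<in>N. L n \<noteq> 0}. L n powr (-1/2) * coef M \<Phi> f n * D (\<Phi> n) x)"

definition LinvPi :: "'a measure \<Rightarrow> 'b set \<Rightarrow> ('b \<Rightarrow> 'a \<Rightarrow> real) \<Rightarrow> ('b \<Rightarrow> real)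
                   \<Rightarrow> ('a \<Rightarrow> real) \<Rightarrow> 'a \<Rightarrow> real" where
  "LinvPi M N \<Phi> L f x = (\<Sum>\<^sub>\<infinity>n\<in>{n\<in>N. L n \<noteq> 0}. (1 / L n) * coef M \<Phi> f n * \<Phi> n x)"

definition PP where
  "PP c d w p q a phi lam t f =
     Pop (muD c d w) (Nd d) (PhiD d p q a phi lam) (lamD d lam) t f"

definition RR where
  "RR c d w p q a phi lam j f =
     Rop (muD c d w) (Nd d) (PhiD d p q a phi lam) (lamD d lam) (DD w p q j) f"

definition UU where
  "UU c d w p q a phi lam t j f = PP c d w p q a phi lam t (RR c d w p q a phi lam j f)"

definition LinvPi0 where
  "LinvPi0 c d w p q a phi lam f =
     LinvPi (muD c d w) (Nd d) (PhiD d p q a phi lam) (lamD d lam) f"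

end

theory Submission
  imports Defs
begin

text \<open>
  Everything reduces to the one-dimensional ladder relation
  \<open>D \<Phi>\<^sub>n = ladder n \<cdot> \<Phi>\<^bsub>twin n\<^esub>\<close>, where \<open>twin\<close> swaps \<open>2k - 1 \<leftrightarrow> 2k\<close> and
  \<open>ladder n \<cdot> ladder (twin n) = -(\<lambda>\<^sub>k - a)\<close> with \<open>k = \<lfloor>(n+1)/2\<rfloor>\<close>: for even \<open>n\<close> it is the
  definition of \<open>\<Phi>\<^sub>n\<close>, for odd \<open>n\<close> the eigen-equation \<open>\<delta>\<^sup>*\<delta>\<phi>\<^sub>k = (\<lambda>\<^sub>k - a)\<phi>\<^sub>k\<close>.
  Hence \<open>D\<^sub>j\<close> maps the tensor product \<open>\<Phi>\<^sub>n\<close> to a multiple of the \<open>\<Phi>\<^sub>m\<close> with \<open>n\<^sub>j\<close> twinned, and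
  \<open>\<LL> \<Phi>\<^sub>n = \<lambda>\<^sub>\<langle>\<^sub>n\<^sub>\<rangle> \<Phi>\<^sub>n\<close>.  Orthonormality of the \<open>\<Phi>\<^sub>n\<close> (from that of the \<open>\<phi>\<^sub>k\<close> and the
  Green identity, after splitting \<open>Xsym\<close> into two half-lines and factoring the product measure)
  turns all spectral series applied to an \<open>f\<close> in the span into finite sums
  \<open>\<Sum> c\<^sub>n m(\<lambda>\<^sub>\<langle>\<^sub>n\<^sub>\<rangle>) \<Phi>\<^sub>n\<close>, on which the four identities are termwise computations with
  \<open>e\<^sup>-\<^sup>t\<^sup>\<surd>\<^sup>\<lambda>\<close>.
\<close>

lemma C1_on_deriv: "C1_on S f \<Longrightarrow> x \<in> S \<Longrightarrow> (f has_real_derivative deriv f x) (at x)"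
  unfolding C1_on_def using DERIV_deriv_iff_field_differentiable by blast

lemma powr_neg_half: "0 < t \<Longrightarrow> t powr - (1/2) = 1 / sqrt (t::real)"
  using powr_minus_divide[of t "1/2"] by (simp add: powr_half_sqrt)

lemma integrable_mult_if_square_integrable:
  fixes f g :: "'a \<Rightarrow> real"
  assumes "integrable M (\<lambda>x. f x * f x)" "f \<in> borel_measurable M"
    "integrable M (\<lambda>x. g x * g x)" "g \<in> borel_measurable M"
  shows "integrable M (\<lambda>x. f x * g x)"
proof (rule Bochner_Integration.integrable_bound[where f="\<lambda>x. f x * f x + g x * g x"])
  show "integrable M (\<lambda>x. f x * f x + g x * g x)" using assms by auto
  show "(\<lambda>x. f x * g x) \<in> borel_measurable M" using assms by auto
  show "AE x in M. norm (f x * g x) \<le> norm (f x * f x + g x * g x)"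
  proof (rule AE_I2)
    fix x
    have "2 * \<bar>f x * g x\<bar> \<le> f x * f x + g x * g x"
      using sum_squares_bound[of "\<bar>f x\<bar>" "\<bar>g x\<bar>"] by (simp add: abs_mult power2_eq_square)
    then show "norm (f x * g x) \<le> norm (f x * f x + g x * g x)" by simp
  qed
qed

lemma continuous_on_AE_zero_imp_zero:
  fixes g :: "real \<Rightarrow> real"
  assumes S: "open S" and g: "continuous_on S g" and ae: "AE x in lborel. x \<in> S \<longrightarrow> g x = 0"
    and y: "y \<in> S"
  shows "g y = 0"
proof (rule ccontr)
  assume "g y \<noteq> 0"
  have "open (S \<inter> g -` (- {0}))"
    using continuous_open_preimage[OF g S, of "- {0}"] by (simp add: open_Compl)
  moreover have "y \<in> S \<inter> g -` (- {0})" using y \<open>g y \<noteq> 0\<close> by auto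
  ultimately obtain e where e: "e > 0" "ball y e \<subseteq> S \<inter> g -` (- {0})"
    by (meson openE)
  from ae obtain N where N: "{x \<in> space lborel. \<not> (x \<in> S \<longrightarrow> g x = 0)} \<subseteq> N"
    "emeasure lborel N = 0" "N \<in> sets lborel" by (rule AE_E)
  have "{y - e <..< y + e} \<subseteq> N"
  proof
    fix x assume "x \<in> {y - e <..< y + e}"
    then have "x \<in> ball y e" by (auto simp: dist_real_def)
    with e have "x \<in> S" "g x \<noteq> 0" by auto
    with N(1) show "x \<in> N" by auto
  qed
  then have "emeasure lborel {y - e <..< y + e} \<le> emeasure lborel N"
    by (rule emeasure_mono) (use N in auto)
  with e N show False by simp
qed

lemma integral_reflect_lborel:
  fixes K :: "real \<Rightarrow> real"
  shows "integrable lborel (\<lambda>x. K (- x)) \<longleftrightarrow> integrable lborel K"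
    and "(\<integral>x. K (- x) \<partial>lborel) = integral\<^sup>L lborel K"
  using lborel_integrable_real_affine_iff[of "-1" K 0] lborel_integral_real_affine[of "-1" K 0]
  by simp_all

lemma open_Xsym: "open (Xsym c)"
proof -
  have "Xsym c = {x. x \<noteq> 0} \<inter> (abs -` {x. ereal x < c})" by (auto simp: Xsym_def)
  moreover have "open (abs -` {x::real. ereal x < c})"
    by (rule open_vimage) (auto intro: continuous_intros simp: open_Collect_less continuous_on_ereal)
  moreover have "open {x::real. x \<noteq> 0}" by (simp add: open_Collect_neq)
  ultimately show ?thesis by auto
qed

lemma open_Xint: "open (Xint c)"
proof -
  have "Xint c = {x. 0 < x} \<inter> Xsym c" by (auto simp: Xsym_def Xint_def)
  then show ?thesis using open_Xsym by (auto simp: open_Collect_less)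
qed

lemma Xsym_iff: "x \<in> Xsym c \<longleftrightarrow> x \<noteq> 0 \<and> \<bar>x\<bar> \<in> Xint c"
  by (auto simp: Xsym_def Xint_def)

lemma uminus_in_Xsym_iff [simp]: "- x \<in> Xsym c \<longleftrightarrow> x \<in> Xsym c"
  by (auto simp: Xsym_def)

lemma Xint_subset_Xsym: "Xint c \<subseteq> Xsym c"
  by (auto simp: Xsym_def Xint_def)

lemma has_real_derivative_abs: "x \<noteq> 0 \<Longrightarrow> (abs has_real_derivative sgn x) (at (x::real))"
proof (cases "x > 0")
  case True
  have "(abs has_real_derivative 1) (at x)"
    by (rule has_field_derivative_transform_within_open[OF DERIV_ident, where S="{0<..}"])
       (use True in auto)
  then show ?thesis using True by simp
next
  case False
  assume "x \<noteq> 0"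
  with False have x: "x < 0" by simp
  have "((\<lambda>y. - y) has_real_derivative - 1) (at x)" by (rule derivative_eq_intros) auto
  then have "(abs has_real_derivative - 1) (at x)"
    by (rule has_field_derivative_transform_within_open[where S="{..<0}"]) (use x in auto)
  then show ?thesis using x by simp
qed

lemma has_real_derivative_sgn: "x \<noteq> 0 \<Longrightarrow> (sgn has_real_derivative 0) (at (x::real))"
proof (cases "x > 0")
  case True
  show ?thesis
    by (rule has_field_derivative_transform_within_open[where S="{0<..}", OF DERIV_const])
       (use True in auto)
next
  case False
  assume "x \<noteq> 0"
  with False have x: "x < 0" by simp
  show ?thesis
    by (rule has_field_derivative_transform_within_open[where S="{..<0}", OF DERIV_const])
       (use x in auto)
qed

lemma has_real_derivative_evenext:
  assumes "(g has_real_derivative g') (at \<bar>x\<bar>)" "x \<noteq> 0"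
  shows "(evenext g has_real_derivative sgn x * g') (at x)"
  unfolding evenext_def[abs_def]
  using DERIV_chain2[OF assms(1) has_real_derivative_abs[OF assms(2)]] by (simp add: mult.commute)

lemma has_real_derivative_oddext:
  assumes "(g has_real_derivative g') (at \<bar>x\<bar>)" "x \<noteq> 0"
  shows "(oddext g has_real_derivative g') (at x)"
proof -
  have "(oddext g has_real_derivative sgn x * (sgn x * g') + 0 * g \<bar>x\<bar>) (at x)"
    unfolding oddext_def[abs_def]
    by (rule DERIV_mult'[OF has_real_derivative_sgn[OF assms(2)] has_real_derivative_evenext[OF assms, unfolded evenext_def[abs_def]]])
  then show ?thesis using assms(2) by (simp add: sgn_mult_self_eq mult.assoc[symmetric])
qed

definition parity_ext :: "nat \<Rightarrow> (real \<Rightarrow> real) \<Rightarrow> real \<Rightarrow> real" where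
  "parity_ext n g = (if even n then evenext g else oddext g)"

lemma parity_ext_differentiable:
  assumes "(g has_real_derivative g') (at \<bar>x\<bar>)" "x \<noteq> 0"
  shows "parity_ext n g field_differentiable (at x)"
  using has_real_derivative_evenext[OF assms] has_real_derivative_oddext[OF assms]
  by (cases "even n") (auto simp: parity_ext_def field_differentiable_def)

section \<open>The one-variable reflection operator\<close>

definition D1 :: "(real \<Rightarrow> real) \<Rightarrow> (real \<Rightarrow> real) \<Rightarrow> (real \<Rightarrow> real) \<Rightarrow> (real \<Rightarrow> real) \<Rightarrow> real \<Rightarrow> real" where
  "D1 w p q g x = evenext p x * deriv g x + oddext q x * ((g x + g (-x)) / 2)
     + (evenext p x * (deriv (evenext w) x / evenext w x) + deriv (evenext p) x - oddext q x)
       * ((g x - g (-x)) / 2)"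

lemma DD_eq_D1: "DD w p q j f x = D1 (w j) (p j) (q j) (\<lambda>s. f (x(j := s))) (x j)"
  unfolding DD_def D1_def partialD_def sigma_def by simp

lemma D1_cong:
  assumes "open S" "x \<in> S" "- x \<in> S" "\<And>s. s \<in> S \<Longrightarrow> g1 s = g2 s"
  shows "D1 w p q g1 x = D1 w p q g2 x"
proof -
  have "deriv g1 x = deriv g2 x"
    by (rule deriv_cong_ev[OF _ refl]) (use assms in \<open>auto simp: eventually_nhds\<close>)
  then show ?thesis unfolding D1_def using assms by simp
qed

lemma D1_sum:
  assumes "finite G" and "\<And>k. k \<in> G \<Longrightarrow> u k field_differentiable (at x)"
  shows "D1 w p q (\<lambda>s. \<Sum>k\<in>G. b k * u k s) x = (\<Sum>k\<in>G. b k * D1 w p q (u k) x)"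
proof -
  define B where "B = (oddext q x + (evenext p x * (deriv (evenext w) x / evenext w x)
                        + deriv (evenext p) x - oddext q x)) / 2"
  define C where "C = (oddext q x - (evenext p x * (deriv (evenext w) x / evenext w x)
                        + deriv (evenext p) x - oddext q x)) / 2"
  have D1_lin: "D1 w p q g x = evenext p x * deriv g x + B * g x + C * g (-x)" for g
    unfolding D1_def B_def C_def by (simp add: algebra_simps add_divide_distrib diff_divide_distrib)
  have "((\<lambda>s. \<Sum>k\<in>G. b k * u k s) has_real_derivative (\<Sum>k\<in>G. b k * deriv (u k) x)) (at x)"
    using assms by (intro DERIV_sum DERIV_cmult) (auto simp: DERIV_deriv_iff_field_differentiable)
  then have "deriv (\<lambda>s. \<Sum>k\<in>G. b k * u k s) x = (\<Sum>k\<in>G. b k * deriv (u k) x)"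
    by (rule DERIV_imp_deriv)
  then show ?thesis
    unfolding D1_lin by (simp add: sum_distrib_left sum.distrib algebra_simps)
qed

lemma D1_evenext:
  assumes "(g has_real_derivative g') (at \<bar>x\<bar>)" "(w has_real_derivative w') (at \<bar>x\<bar>)"
    "(p has_real_derivative p') (at \<bar>x\<bar>)" "x \<noteq> 0"
  shows "D1 w p q (evenext g) x = sgn x * delta p q g \<bar>x\<bar>"
  using DERIV_imp_deriv[OF has_real_derivative_evenext[OF assms(1,4)]] DERIV_imp_deriv[OF assms(1)]
  by (simp add: D1_def delta_def evenext_def oddext_def algebra_simps)

lemma D1_oddext:
  assumes "(g has_real_derivative g') (at \<bar>x\<bar>)" "(w has_real_derivative w') (at \<bar>x\<bar>)"
    "(p has_real_derivative p') (at \<bar>x\<bar>)" "x \<noteq> 0"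
  shows "D1 w p q (oddext g) x = - deltastar w p q g \<bar>x\<bar>"
proof -
  have ss: "sgn x * sgn x = 1" using assms(4) by (simp add: sgn_mult_self_eq)
  show ?thesis
    using DERIV_imp_deriv[OF has_real_derivative_oddext[OF assms(1,4)]] DERIV_imp_deriv[OF assms(1)]
      DERIV_imp_deriv[OF has_real_derivative_evenext[OF assms(2,4)]] DERIV_imp_deriv[OF assms(2)]
      DERIV_imp_deriv[OF has_real_derivative_evenext[OF assms(3,4)]] DERIV_imp_deriv[OF assms(3)]
      assms(4)
    by (simp add: D1_def deltastar_def evenext_def oddext_def algebra_simps ss)
qed


section \<open>The one-dimensional system\<close>

definition twin :: "nat \<Rightarrow> nat" where
  "twin n = (if n = 0 then 0 else if even n then n - 1 else n + 1)"

lemma twin_twin [simp]: "twin (twin n) = n"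
  by (auto simp: twin_def)

lemma Suc_twin_div_2 [simp]: "Suc (twin n) div 2 = Suc n div 2"
  by (auto simp: twin_def elim!: evenE oddE)

locale one_dim_system =
  fixes c :: ereal and W P Q :: "real \<Rightarrow> real" and a :: real
    and \<phi> :: "nat \<Rightarrow> real \<Rightarrow> real" and lam :: "nat \<Rightarrow> real"
  assumes W_reg: "C2_on (Xint c) W" and W_pos: "\<forall>x\<in>Xint c. W x > 0"
    and P_reg: "C2_on (Xint c) P" and Q_reg: "C1_on (Xint c) Q"
    and onb: "ONB (mu1 c W) \<phi>" and smooth: "\<forall>k. Cinf_on (Xint c) (\<phi> k)"
    and eigen: "\<forall>k. \<forall>x\<in>Xint c. Lop W P Q a (\<phi> k) x = lam k * \<phi> k x"
    and lam_mono: "strict_mono lam"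
    and delta_L2: "\<forall>k. L2 (mu1 c W) (delta P Q (\<phi> k))"
    and green: "\<forall>k m. ip (mu1 c W) (delta P Q (\<phi> k)) (delta P Q (\<phi> m))
       = ip (mu1 c W) (deltastar W P Q (delta P Q (\<phi> k))) (\<phi> m)"
    and a_lam0: "a = lam 0"
begin

abbreviation Ph where "Ph n \<equiv> Phi1 P Q a \<phi> lam n"

definition dphi where "dphi k = delta P Q (\<phi> k)"

definition gap where "gap k = lam k - a"

definition ladder where
  "ladder n = (if even n then - sqrt (gap (n div 2)) else sqrt (gap ((n + 1) div 2)))"

lemma gap_0: "gap 0 = 0"
  unfolding gap_def using a_lam0 by simp

lemma gap_pos: "k > 0 \<Longrightarrow> gap k > 0"
  using lam_mono a_lam0 unfolding gap_def strict_mono_def by auto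

lemma gap_nonneg: "gap k \<ge> 0"
  using gap_pos[of k] gap_0 by (cases "k = 0") auto

lemma ladder_twin: "ladder n * ladder (twin n) = - gap ((n + 1) div 2)"
proof (cases "even n \<and> n \<noteq> 0")
  case True
  then have "odd (twin n)" "(twin n + 1) div 2 = n div 2" "(n + 1) div 2 = n div 2"
    by (auto simp: twin_def elim!: evenE)
  then show ?thesis using True gap_nonneg[of "n div 2"] by (simp add: ladder_def)
next
  case False
  then have "even (twin n)" "twin n div 2 = (n + 1) div 2"
    by (auto simp: twin_def)
  then show ?thesis using False gap_nonneg[of "(n + 1) div 2"] by (auto simp: ladder_def gap_0)
qed

lemma ladder_eq_0: "gap ((n + 1) div 2) = 0 \<Longrightarrow> ladder n = 0"
  by (auto simp: ladder_def elim!: evenE oddE)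

lemma W_deriv: "y \<in> Xint c \<Longrightarrow> (W has_real_derivative deriv W y) (at y)"
  using W_reg C1_on_deriv unfolding C2_on_def by blast

lemma P_deriv: "y \<in> Xint c \<Longrightarrow> (P has_real_derivative deriv P y) (at y)"
  using P_reg C1_on_deriv unfolding C2_on_def by blast

lemma Q_deriv: "y \<in> Xint c \<Longrightarrow> (Q has_real_derivative deriv Q y) (at y)"
  using Q_reg C1_on_deriv by blast

lemma phi_deriv: "y \<in> Xint c \<Longrightarrow> ((deriv ^^ i) (\<phi> k) has_real_derivative (deriv ^^ Suc i) (\<phi> k) y) (at y)"
  using smooth unfolding Cinf_on_def by (simp add: DERIV_deriv_iff_field_differentiable)

lemma dphi_deriv: "y \<in> Xint c \<Longrightarrow> (dphi k has_real_derivative deriv (dphi k) y) (at y)"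
proof -
  assume y: "y \<in> Xint c"
  have "(dphi k has_real_derivative deriv P y * deriv (\<phi> k) y + deriv (deriv (\<phi> k)) y * P y
        + (deriv Q y * \<phi> k y + deriv (\<phi> k) y * Q y)) (at y)"
    unfolding dphi_def delta_def
    using phi_deriv[OF y, of 0 k] phi_deriv[OF y, of 1 k]
    by (intro DERIV_add DERIV_mult P_deriv Q_deriv y) auto
  then show ?thesis using DERIV_imp_deriv by metis
qed

lemma deltastar_dphi: "y \<in> Xint c \<Longrightarrow> deltastar W P Q (dphi k) y = gap k * \<phi> k y"
  using eigen unfolding Lop_def dphi_def gap_def by (auto simp: algebra_simps)

lemma space_mu1: "space (mu1 c W) = Xint c"
  by (simp add: mu1_def space_restrict_space)

lemma Xint_sets [measurable]: "Xint c \<in> sets lborel" "Xint c \<in> sets borel"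
  using open_Xint by simp_all

lemma W_measurable [measurable]: "W \<in> borel_measurable (restrict_space lborel (Xint c))"
proof -
  have "continuous_on (Xint c) W"
    using W_deriv by (intro continuous_at_imp_continuous_on) (auto dest: DERIV_isCont)
  then have "W \<in> borel_measurable (restrict_space borel (Xint c))"
    by (rule borel_measurable_continuous_on_restrict)
  then show ?thesis
    by (subst measurable_cong_sets[OF sets_restrict_space_cong[OF sets_lborel] refl])
qed

lemma sets_mu1: "sets (mu1 c W) = sets (restrict_space lborel (Xint c))"
  by (simp add: mu1_def)

lemma measurable_mu1_iff:
  "F \<in> borel_measurable (mu1 c W) \<longleftrightarrow> F \<in> borel_measurable (restrict_space lborel (Xint c))"
  by (simp add: measurable_cong_sets[OF sets_mu1 refl])

lemma AE_W_nonneg: "AE x in restrict_space lborel (Xint c). 0 \<le> W x"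
  using W_pos by (subst AE_restrict_space_iff) (auto intro: less_imp_le)

lemma integrable_mu1_iff:
  assumes "F \<in> borel_measurable (mu1 c W)"
  shows "integrable (mu1 c W) F \<longleftrightarrow> integrable lborel (\<lambda>x. indicator (Xint c) x * (W x * F x))"
proof -
  have F: "F \<in> borel_measurable (restrict_space lborel (Xint c))" using assms measurable_mu1_iff by blast
  show ?thesis unfolding mu1_def
    by (subst integrable_density[OF F W_measurable AE_W_nonneg], subst integrable_restrict_space) auto
qed

lemma integral_mu1:
  assumes "F \<in> borel_measurable (mu1 c W)"
  shows "integral\<^sup>L (mu1 c W) F = (\<integral>x. indicator (Xint c) x * (W x * F x) \<partial>lborel)"
proof -
  have F: "F \<in> borel_measurable (restrict_space lborel (Xint c))" using assms measurable_mu1_iff by blast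
  show ?thesis unfolding mu1_def
    by (subst integral_density[OF F W_measurable AE_W_nonneg], subst integral_restrict_space) auto
qed

lemma dphi_L2: "integrable (mu1 c W) (\<lambda>x. dphi k x * dphi k x)" "dphi k \<in> borel_measurable (mu1 c W)"
  using delta_L2 unfolding L2_def dphi_def by (auto simp: power2_eq_square)

lemma phi_L2: "integrable (mu1 c W) (\<lambda>x. \<phi> k x * \<phi> k x)" "\<phi> k \<in> borel_measurable (mu1 c W)"
  using onb unfolding ONB_def L2_def by (auto simp: power2_eq_square)

lemma ip_phi: "ip (mu1 c W) (\<phi> k) (\<phi> l) = (if k = l then 1 else 0)"
  using onb unfolding ONB_def by blast

lemma ip_dphi: "ip (mu1 c W) (dphi k) (dphi l) = (if k = l then gap k else 0)"
proof -
  have "ip (mu1 c W) (dphi k) (dphi l) = ip (mu1 c W) (deltastar W P Q (dphi k)) (\<phi> l)"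
    using green unfolding dphi_def by blast
  also have "\<dots> = (\<integral>x. gap k * (\<phi> k x * \<phi> l x) \<partial>mu1 c W)"
    unfolding ip_def by (rule Bochner_Integration.integral_cong) (auto simp: space_mu1 deltastar_dphi)
  also have "\<dots> = gap k * ip (mu1 c W) (\<phi> k) (\<phi> l)" by (simp add: ip_def)
  finally show ?thesis by (simp add: ip_phi)
qed

text \<open>\<open>\<delta>\<phi>\<^sub>0\<close> has \<open>L\<^sup>2\<close> norm \<open>gap 0 = 0\<close> and is continuous.\<close>

lemma dphi_0_eq_0: "y \<in> Xint c \<Longrightarrow> dphi 0 y = 0"
proof -
  assume y: "y \<in> Xint c"
  have "(\<integral>x. dphi 0 x * dphi 0 x \<partial>mu1 c W) = 0"
    using ip_dphi[of 0 0] by (simp add: ip_def gap_0)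
  then have "AE x in mu1 c W. dphi 0 x * dphi 0 x = 0"
    using integral_nonneg_eq_0_iff_AE[OF dphi_L2(1)] by simp
  then have "AE x in restrict_space lborel (Xint c). 0 < ennreal (W x) \<longrightarrow> dphi 0 x * dphi 0 x = 0"
    unfolding mu1_def by (subst (asm) AE_density) auto
  then have "AE x in lborel. x \<in> Xint c \<longrightarrow> 0 < ennreal (W x) \<longrightarrow> dphi 0 x * dphi 0 x = 0"
    by (subst (asm) AE_restrict_space_iff) auto
  then have "AE x in lborel. x \<in> Xint c \<longrightarrow> dphi 0 x = 0"
    by (rule AE_mp) (use W_pos in auto)
  moreover have "continuous_on (Xint c) (dphi 0)"
    using dphi_deriv by (intro continuous_at_imp_continuous_on) (auto dest: DERIV_isCont)
  ultimately show ?thesis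
    using continuous_on_AE_zero_imp_zero[OF open_Xint] y by blast
qed

definition Phi_coeff where
  "Phi_coeff n = (if even n then 1 / sqrt 2 else - (1 / sqrt 2) * gap ((n + 1) div 2) powr (-1/2))"

definition Phi_profile where
  "Phi_profile n = (if even n then \<phi> (n div 2) else dphi ((n + 1) div 2))"

lemma Phi1_eq: "x \<in> Xsym c \<Longrightarrow> Ph n x = Phi_coeff n * parity_ext n (Phi_profile n) x"
proof -
  assume x: "x \<in> Xsym c"
  then have "\<bar>x\<bar> \<in> Xint c" "x \<noteq> 0" by (auto simp: Xsym_iff)
  then have "deriv (evenext (\<phi> k)) x = sgn x * deriv (\<phi> k) \<bar>x\<bar>" for k
    using phi_deriv[of _ 0 k] by (intro DERIV_imp_deriv has_real_derivative_evenext) auto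
  then show ?thesis
    by (auto simp: Phi1_def Phi_coeff_def Phi_profile_def parity_ext_def delta_def dphi_def
        evenext_def oddext_def gap_def algebra_simps)
qed

lemma Phi_profile_deriv:
  "y \<in> Xint c \<Longrightarrow> (Phi_profile n has_real_derivative deriv (Phi_profile n) y) (at y)"
  using phi_deriv[of y 0] dphi_deriv[of y] by (simp add: Phi_profile_def)

lemma Phi1_differentiable: "x \<in> Xsym c \<Longrightarrow> Ph n field_differentiable (at x)"
proof -
  assume x: "x \<in> Xsym c"
  then have y: "\<bar>x\<bar> \<in> Xint c" and x0: "x \<noteq> 0" by (auto simp: Xsym_iff)
  have "parity_ext n (Phi_profile n) field_differentiable (at x)"
    by (rule parity_ext_differentiable[OF Phi_profile_deriv[OF y] x0])
  then obtain D where "(parity_ext n (Phi_profile n) has_real_derivative D) (at x)"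
    unfolding field_differentiable_def by blast
  then have "((\<lambda>x. Phi_coeff n * parity_ext n (Phi_profile n) x) has_real_derivative Phi_coeff n * D) (at x)"
    by (rule DERIV_cmult)
  then have "(Ph n has_real_derivative Phi_coeff n * D) (at x)"
    by (rule has_field_derivative_transform_within_open[OF _ open_Xsym x]) (simp add: Phi1_eq)
  then show ?thesis by (auto simp: field_differentiable_def has_field_derivative_def)
qed

lemma Phi1_uminus: "x \<in> Xsym c \<Longrightarrow> Ph n (- x) = (if even n then Ph n x else - Ph n x)"
  by (simp add: Phi1_eq parity_ext_def evenext_def oddext_def)

lemma Phi1_Xint: "y \<in> Xint c \<Longrightarrow> Ph n y = Phi_coeff n * Phi_profile n y"
proof -
  assume y: "y \<in> Xint c"
  then have "y \<in> Xsym c" "y > 0" using Xint_subset_Xsym by (auto simp: Xint_def)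
  then show ?thesis by (simp add: Phi1_eq parity_ext_def evenext_def oddext_def)
qed

lemma D1_Phi1_eq_coeff:
  "x \<in> Xsym c \<Longrightarrow> D1 W P Q (Ph n) x = Phi_coeff n * D1 W P Q (parity_ext n (Phi_profile n)) x"
proof -
  assume x: "x \<in> Xsym c"
  then have y: "\<bar>x\<bar> \<in> Xint c" and x0: "x \<noteq> 0" by (auto simp: Xsym_iff)
  have "D1 W P Q (Ph n) x = D1 W P Q (\<lambda>s. \<Sum>_\<in>{()}. Phi_coeff n * parity_ext n (Phi_profile n) s) x"
    by (rule D1_cong[OF open_Xsym x]) (use x Phi1_eq in auto)
  also have "\<dots> = Phi_coeff n * D1 W P Q (parity_ext n (Phi_profile n)) x"
    using parity_ext_differentiable[OF Phi_profile_deriv[OF y] x0] by (subst D1_sum) auto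
  finally show ?thesis .
qed

lemma D1_Phi1: "x \<in> Xsym c \<Longrightarrow> D1 W P Q (Ph n) x = ladder n * Ph (twin n) x"
proof -
  assume x: "x \<in> Xsym c"
  define k where "k = (n + 1) div 2"
  have y: "\<bar>x\<bar> \<in> Xint c" and x0: "x \<noteq> 0" using x by (auto simp: Xsym_iff)
  note D = D1_Phi1_eq_coeff[OF x, of n]
  have Ph_twin: "Ph (twin n) x = Phi_coeff (twin n) * parity_ext (twin n) (Phi_profile (twin n)) x"
    by (rule Phi1_eq[OF x])
  show ?thesis
  proof (cases "even n")
    case True
    have "D1 W P Q (evenext (\<phi> k)) x = sgn x * dphi k \<bar>x\<bar>"
      using D1_evenext[OF phi_deriv[OF y, of 0] W_deriv[OF y] P_deriv[OF y] x0] True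
      by (simp add: dphi_def)
    then have DE: "D1 W P Q (Ph n) x = (1 / sqrt 2) * sgn x * dphi k \<bar>x\<bar>"
      using D True by (simp add: Phi_coeff_def Phi_profile_def parity_ext_def k_def)
    show ?thesis
    proof (cases "k = 0")
      case True
      then show ?thesis using DE dphi_0_eq_0[OF y] \<open>even n\<close> by (simp add: ladder_def gap_0 k_def)
    next
      case False
      then have n: "twin n = n - 1" "odd (n - 1)" "n div 2 = k" "n \<noteq> 0"
        using \<open>even n\<close> by (auto simp: twin_def k_def elim!: evenE)
      have "sqrt (gap k) * gap k powr (-1/2) = 1"
        using gap_pos[of k] False by (simp add: powr_neg_half)
      then show ?thesis
        using DE Ph_twin \<open>even n\<close> n
        by (simp add: ladder_def Phi_coeff_def Phi_profile_def parity_ext_def oddext_def)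
    qed
  next
    case False
    then have k: "k > 0" and n: "twin n = n + 1" "even (n + 1)" "(n + 1) div 2 = k"
      by (auto simp: twin_def k_def odd_pos)
    have "D1 W P Q (oddext (dphi k)) x = - gap k * \<phi> k \<bar>x\<bar>"
      using D1_oddext[OF dphi_deriv[OF y] W_deriv[OF y] P_deriv[OF y] x0]
      by (simp add: deltastar_dphi[OF y])
    then have "D1 W P Q (Ph n) x = (1 / sqrt 2) * (gap k powr (-1/2) * gap k) * \<phi> k \<bar>x\<bar>"
      using D False by (simp add: Phi_coeff_def Phi_profile_def parity_ext_def k_def)
    also have "gap k powr (-1/2) * gap k = sqrt (gap k)"
      using gap_pos[OF k] by (simp add: powr_neg_half real_div_sqrt)
    finally show ?thesis
      using Ph_twin False n
      by (simp add: ladder_def Phi_coeff_def Phi_profile_def parity_ext_def evenext_def)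
  qed
qed

lemma Phi_profile_L2:
  "integrable (mu1 c W) (\<lambda>x. Phi_profile n x * Phi_profile n x)" "Phi_profile n \<in> borel_measurable (mu1 c W)"
  using phi_L2 dphi_L2 by (simp_all add: Phi_profile_def)

lemma ip_Phi_profile:
  assumes "even n \<longleftrightarrow> even m"
  shows "Phi_coeff n * Phi_coeff m * ip (mu1 c W) (Phi_profile n) (Phi_profile m) = (if n = m then 1/2 else 0)"
proof (cases "even n")
  case True
  with assms show ?thesis
    by (auto simp: Phi_coeff_def Phi_profile_def ip_phi elim!: evenE)
next
  case False
  define k l where "k = (n + 1) div 2" and "l = (m + 1) div 2"
  have m: "odd m" using assms False by simp
  have kl: "k > 0" "n = m \<longleftrightarrow> k = l"
    using False m unfolding k_def l_def by (auto elim!: oddE)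
  have "ip (mu1 c W) (Phi_profile n) (Phi_profile m) = (if k = l then gap k else 0)"
    using False m by (simp add: Phi_profile_def ip_dphi k_def l_def)
  moreover have "Phi_coeff n * Phi_coeff m = (1/2) * gap k powr - (1/2) * gap l powr - (1/2)"
    using False m by (simp add: Phi_coeff_def k_def l_def)
  ultimately show ?thesis
    using kl gap_pos[OF kl(1)] by (auto simp: powr_neg_half real_div_sqrt)
qed

definition half_integrand where
  "half_integrand n m x = indicator (Xint c) x
     * (W x * (Phi_coeff n * Phi_coeff m * (Phi_profile n x * Phi_profile m x)))"

lemma half_integrand_integral:
  shows "integrable lborel (half_integrand n m)"
    and "integral\<^sup>L lborel (half_integrand n m)
           = Phi_coeff n * Phi_coeff m * ip (mu1 c W) (Phi_profile n) (Phi_profile m)"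
proof -
  define F where "F x = Phi_coeff n * Phi_coeff m * (Phi_profile n x * Phi_profile m x)" for x
  have F_int: "integrable (mu1 c W) F"
    unfolding F_def
    by (rule integrable_mult_right, rule integrable_mult_if_square_integrable; rule Phi_profile_L2)
  have F_meas: "F \<in> borel_measurable (mu1 c W)"
    unfolding F_def[abs_def] by (intro borel_measurable_times borel_measurable_const Phi_profile_L2(2))
  show "integrable lborel (half_integrand n m)"
    using integrable_mu1_iff[OF F_meas] F_int unfolding half_integrand_def F_def by blast
  show "integral\<^sup>L lborel (half_integrand n m)
      = Phi_coeff n * Phi_coeff m * ip (mu1 c W) (Phi_profile n) (Phi_profile m)"
    using integral_mu1[OF F_meas] unfolding half_integrand_def[abs_def] by (simp add: F_def[abs_def] ip_def)
qed

lemma Phi1_integrand_split: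
  "indicator (Xsym c) x * evenext W x * (Ph n x * Ph m x)
     = half_integrand n m x + (if even n \<longleftrightarrow> even m then 1 else -1) * half_integrand n m (- x)"
proof (cases "x \<in> Xint c")
  case True
  have "x \<in> Xsym c" using True Xint_subset_Xsym by blast
  moreover have "x > 0" using True by (simp add: Xint_def)
  moreover have "- x \<notin> Xint c" using \<open>x > 0\<close> by (simp add: Xint_def)
  ultimately show ?thesis using True by (simp add: half_integrand_def Phi1_Xint evenext_def)
next
  case False
  show ?thesis
  proof (cases "- x \<in> Xint c")
    case True
    have "- x \<in> Xsym c" using True Xint_subset_Xsym by blast
    then have x: "x \<in> Xsym c" by simp
    have "x < 0" using True by (simp add: Xint_def)
    have "Ph n x * Ph m x = (if even n \<longleftrightarrow> even m then 1 else -1) * (Ph n (- x) * Ph m (- x))"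
      using Phi1_uminus[OF \<open>- x \<in> Xsym c\<close>, of n] Phi1_uminus[OF \<open>- x \<in> Xsym c\<close>, of m] by simp
    then show ?thesis
      using True False x \<open>x < 0\<close> by (simp add: half_integrand_def Phi1_Xint evenext_def)
  next
    case False
    have "\<bar>x\<bar> \<notin> Xint c" using False \<open>x \<notin> Xint c\<close> by (cases "x \<ge> 0") simp_all
    then have "x \<notin> Xsym c" by (simp add: Xsym_iff)
    then show ?thesis using False \<open>x \<notin> Xint c\<close> by (simp add: half_integrand_def)
  qed
qed

lemma Phi1_orthonormal:
  shows "integrable lborel (\<lambda>x. indicator (Xsym c) x * evenext W x * (Ph n x * Ph m x))"
    and "(\<integral>x. indicator (Xsym c) x * evenext W x * (Ph n x * Ph m x) \<partial>lborel) = (if n = m then 1 else 0)"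
proof -
  define e :: real where "e = (if even n \<longleftrightarrow> even m then 1 else -1)"
  note split = Phi1_integrand_split[of _ n m, folded e_def]
  note K = half_integrand_integral[of n m]
  show "integrable lborel (\<lambda>x. indicator (Xsym c) x * evenext W x * (Ph n x * Ph m x))"
    unfolding split using K integral_reflect_lborel(1)[of "half_integrand n m"] by auto
  have "(\<integral>x. indicator (Xsym c) x * evenext W x * (Ph n x * Ph m x) \<partial>lborel)
      = (1 + e) * integral\<^sup>L lborel (half_integrand n m)"
    unfolding split using K integral_reflect_lborel[of "half_integrand n m"] by (simp add: algebra_simps)
  also have "\<dots> = (if n = m then 1 else 0)"
    using ip_Phi_profile[of n m] by (auto simp: K(2) e_def)
  finally show "(\<integral>x. indicator (Xsym c) x * evenext W x * (Ph n x * Ph m x) \<partial>lborel)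
      = (if n = m then 1 else 0)" .
qed

lemma continuous_on_Phi1: "continuous_on (Xsym c) (Ph n)"
  by (intro continuous_at_imp_continuous_on ballI field_differentiable_imp_continuous_at
      Phi1_differentiable)

lemma evenext_W_pos: "x \<in> Xsym c \<Longrightarrow> evenext W x > 0"
  using W_pos by (simp add: evenext_def Xsym_iff)

lemma continuous_on_evenext_W: "continuous_on (Xsym c) (evenext W)"
proof (intro continuous_at_imp_continuous_on ballI)
  fix x assume "x \<in> Xsym c"
  then have "\<bar>x\<bar> \<in> Xint c" "x \<noteq> 0" by (simp_all add: Xsym_iff)
  then show "isCont (evenext W) x"
    using DERIV_isCont[OF has_real_derivative_evenext[OF W_deriv]] by blast
qed

end

section \<open>The product system\<close>

lemma measurable_coordinate_Xd:
  assumes "continuous_on (Xsym c) f" "i < d"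
  shows "(\<lambda>x. f (x i)) \<in> borel_measurable (restrict_space (PiM {..<d} (\<lambda>_. lborel)) (Xd c d))"
proof -
  have "(\<lambda>x. x i) \<in> measurable (restrict_space (PiM {..<d} (\<lambda>_. lborel)) (Xd c d)) (restrict_space lborel (Xsym c))"
    by (rule measurable_restrict_space3[OF measurable_component_singleton]) (use assms in \<open>auto simp: Xd_def\<close>)
  moreover have "f \<in> borel_measurable (restrict_space lborel (Xsym c))"
    using borel_measurable_continuous_on_restrict[OF assms(1)]
    by (subst measurable_cong_sets[OF sets_restrict_space_cong[OF sets_lborel] refl])
  ultimately show ?thesis using measurable_comp by (fastforce simp: comp_def)
qed

lemma Xd_sets: "Xd c d \<in> sets (PiM {..<d} (\<lambda>_. lborel))"
  using open_Xsym unfolding Xd_def by (intro sets_PiM_I_finite) auto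

lemma indicator_Xd:
  assumes "x \<in> space (PiM {..<d} (\<lambda>_. lborel :: real measure))"
  shows "indicator (Xd c d) x = (\<Prod>i<d. indicator (Xsym c) (x i) :: real)"
proof (cases "\<forall>i<d. x i \<in> Xsym c")
  case True
  then have "x \<in> Xd c d" using assms by (auto simp: Xd_def space_PiM PiE_def)
  then show ?thesis using True by simp
next
  case False
  then obtain i where "i < d" "x i \<notin> Xsym c" by auto
  then have "x \<notin> Xd c d" by (auto simp: Xd_def)
  moreover have "(\<Prod>i<d. indicator (Xsym c) (x i) :: real) = 0"
    using \<open>i < d\<close> \<open>x i \<notin> Xsym c\<close> by (intro prod_zero bexI[of _ i]) auto
  ultimately show ?thesis by simp
qed

lemma space_muD: "space (muD c d w) = Xd c d"
  by (auto simp: muD_def space_restrict_space space_PiM Xd_def)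

interpretation lborel_product: product_sigma_finite "\<lambda>_::nat. lborel :: real measure"
  by unfold_locales

lemma integral_muD_prod:
  fixes f :: "nat \<Rightarrow> real \<Rightarrow> real"
  assumes w_cont: "\<And>i. i < d \<Longrightarrow> continuous_on (Xsym c) (evenext (w i))"
    and w_nonneg: "\<And>i t. i < d \<Longrightarrow> t \<in> Xsym c \<Longrightarrow> 0 \<le> evenext (w i) t"
    and f_cont: "\<And>i. i < d \<Longrightarrow> continuous_on (Xsym c) (f i)"
    and f_int: "\<And>i. i < d \<Longrightarrow> integrable lborel (\<lambda>t. indicator (Xsym c) t * evenext (w i) t * f i t)"
  shows "integrable (muD c d w) (\<lambda>x. \<Prod>i<d. f i (x i))"
    and "integral\<^sup>L (muD c d w) (\<lambda>x. \<Prod>i<d. f i (x i))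
         = (\<Prod>i<d. \<integral>t. indicator (Xsym c) t * evenext (w i) t * f i t \<partial>lborel)"
proof -
  define B where "B = PiM {..<d} (\<lambda>_. lborel :: real measure)"
  define R where "R = restrict_space B (Xd c d)"
  define g where "g x = (\<Prod>i<d. evenext (w i) (x i))" for x :: "nat \<Rightarrow> real"
  define F where "F x = (\<Prod>i<d. f i (x i))" for x :: "nat \<Rightarrow> real"
  define h where "h i t = indicator (Xsym c) t * evenext (w i) t * f i t" for i t
  have F_meas: "F \<in> borel_measurable R"
    unfolding F_def R_def B_def by (intro borel_measurable_prod measurable_coordinate_Xd f_cont) auto
  have g_meas: "g \<in> borel_measurable R"
    unfolding g_def R_def B_def by (intro borel_measurable_prod measurable_coordinate_Xd w_cont) auto
  have g_nonneg: "AE x in R. 0 \<le> g x"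
  proof (rule AE_I2)
    fix x assume "x \<in> space R"
    then have "\<forall>i<d. x i \<in> Xsym c" by (auto simp: R_def B_def space_restrict_space Xd_def PiE_iff)
    then show "0 \<le> g x" unfolding g_def by (intro prod_nonneg) (simp add: w_nonneg)
  qed
  have Xd_B: "Xd c d \<inter> space B \<in> sets B"
    using Xd_sets[of c d] by (simp add: B_def Int_absorb2 Xd_def space_PiM subset_iff)
  have mu: "muD c d w = density R g" unfolding muD_def R_def B_def g_def by simp
  have factor: "indicator (Xd c d) x *\<^sub>R (g x *\<^sub>R F x) = (\<Prod>i<d. h i (x i))" if "x \<in> space B" for x
    using indicator_Xd[of x d c] that
    by (simp add: B_def g_def F_def h_def prod.distrib mult.assoc)
  have h_int: "integrable B (\<lambda>x. \<Prod>i<d. h i (x i))"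
    unfolding B_def by (rule lborel_product.product_integrable_prod) (use f_int in \<open>auto simp: h_def\<close>)
  have "integrable B (\<lambda>x. indicator (Xd c d) x *\<^sub>R (g x *\<^sub>R F x))"
    using h_int by (rule Bochner_Integration.integrable_cong[THEN iffD2, OF refl, rotated]) (use factor in auto)
  then show "integrable (muD c d w) (\<lambda>x. \<Prod>i<d. f i (x i))"
    unfolding mu R_def
    using integrable_density[OF F_meas[unfolded R_def] g_meas[unfolded R_def] g_nonneg[unfolded R_def]]
    by (simp add: F_def[abs_def] integrable_restrict_space[OF Xd_B])
  have "integral\<^sup>L (muD c d w) (\<lambda>x. \<Prod>i<d. f i (x i)) = integral\<^sup>L R (\<lambda>x. g x *\<^sub>R F x)"
    unfolding mu using integral_density[OF F_meas g_meas g_nonneg] by (simp add: F_def[abs_def])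
  also have "\<dots> = integral\<^sup>L B (\<lambda>x. indicator (Xd c d) x *\<^sub>R (g x *\<^sub>R F x))"
    unfolding R_def by (rule integral_restrict_space[OF Xd_B])
  also have "\<dots> = integral\<^sup>L B (\<lambda>x. \<Prod>i<d. h i (x i))"
    by (rule Bochner_Integration.integral_cong) (use factor in auto)
  also have "\<dots> = (\<Prod>i<d. integral\<^sup>L lborel (h i))"
    unfolding B_def by (rule lborel_product.product_integral_prod) (use f_int in \<open>auto simp: h_def\<close>)
  finally show "integral\<^sup>L (muD c d w) (\<lambda>x. \<Prod>i<d. f i (x i))
      = (\<Prod>i<d. \<integral>t. indicator (Xsym c) t * evenext (w i) t * f i t \<partial>lborel)"
    unfolding h_def .
qed

lemma infsum_mult_finite_coeffs:
  fixes F :: "'n \<Rightarrow> real" and b :: "'k \<Rightarrow> real"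
  assumes "finite G"
  shows "(\<Sum>\<^sub>\<infinity>n\<in>N. F n * (\<Sum>k\<in>G. if h k = n then b k else 0))
       = (\<Sum>k\<in>G. if h k \<in> N then b k * F (h k) else 0)"
proof -
  have "(\<Sum>\<^sub>\<infinity>n\<in>N. F n * (\<Sum>k\<in>G. if h k = n then b k else 0))
      = (\<Sum>\<^sub>\<infinity>n\<in>N \<inter> h ` G. F n * (\<Sum>k\<in>G. if h k = n then b k else 0))"
  proof (rule infsum_cong_neutral)
    fix n assume "n \<in> N - N \<inter> h ` G"
    then have "(\<Sum>k\<in>G. if h k = n then b k else 0) = 0" by (intro sum.neutral) auto
    then show "F n * (\<Sum>k\<in>G. if h k = n then b k else 0) = 0" by simp
  qed auto
  also have "\<dots> = (\<Sum>n\<in>N \<inter> h ` G. \<Sum>k\<in>G. if h k = n then b k * F (h k) else 0)"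
    using assms by (simp add: sum_distrib_left if_distrib mult.commute cong: if_cong)
  also have "\<dots> = (\<Sum>k\<in>G. \<Sum>n\<in>N \<inter> h ` G. if h k = n then b k * F (h k) else 0)"
    by (rule sum.swap)
  also have "\<dots> = (\<Sum>k\<in>G. if h k \<in> N then b k * F (h k) else 0)"
    using assms by (intro sum.cong refl) (auto simp: sum.delta)
  finally show ?thesis .
qed

locale multi_dim_system =
  fixes d :: nat and c :: ereal and w p q :: "nat \<Rightarrow> real \<Rightarrow> real" and a :: "nat \<Rightarrow> real"
    and phi :: "nat \<Rightarrow> nat \<Rightarrow> real \<Rightarrow> real" and lam :: "nat \<Rightarrow> nat \<Rightarrow> real"
  assumes one_dim: "\<And>i. i < d \<Longrightarrow> one_dim_system c (w i) (p i) (q i) (a i) (phi i) (lam i)"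
    and a_nonneg: "\<And>i. i < d \<Longrightarrow> a i \<ge> 0"
begin

abbreviation PhD where "PhD n \<equiv> PhiD d p q a phi lam n"
abbreviation Ph1 where "Ph1 i k \<equiv> Phi1 (p i) (q i) (a i) (phi i) (lam i) k"
abbreviation L where "L \<equiv> lamD d lam"
abbreviation A where "A \<equiv> (\<Sum>i<d. a i)"

definition ladder_at where "ladder_at j n = one_dim_system.ladder (a j) (lam j) (n j)"

definition twin_at where "twin_at j n = n(j := twin (n j))"

lemma twin_at_twin_at [simp]: "twin_at j (twin_at j n) = n"
  by (simp add: twin_at_def)

lemma twin_at_Nd: "n \<in> Nd d \<Longrightarrow> j < d \<Longrightarrow> twin_at j n \<in> Nd d"
  by (auto simp: Nd_def twin_at_def PiE_def extensional_def)

lemma lamD_twin_at: "L (twin_at j n) = L n"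
  unfolding lamD_def twin_at_def by (intro sum.cong) auto

lemma one_dim_gap_eq: "i < d \<Longrightarrow> one_dim_system.gap (a i) (lam i) k = lam i k - a i"
  using one_dim_system.gap_def[OF one_dim] by blast

lemma a_le_lam: "i < d \<Longrightarrow> a i \<le> lam i k"
  using one_dim_system.gap_nonneg[OF one_dim] one_dim_gap_eq by fastforce

lemma A_le_lamD: "A \<le> L n"
  unfolding lamD_def by (intro sum_mono a_le_lam) auto

lemma A_nonneg: "A \<ge> 0"
  by (intro sum_nonneg a_nonneg) auto

lemma lamD_nonneg: "L n \<ge> 0"
  using A_le_lamD[of n] A_nonneg by linarith

lemma sum_ladder_twin_at: "(\<Sum>j<d. ladder_at j n * ladder_at j (twin_at j n)) = A - L n"
  using one_dim_system.ladder_twin[OF one_dim]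
  by (simp add: ladder_at_def twin_at_def one_dim_gap_eq lamD_def sum_subtractf)

lemma ladder_at_eq_0:
  assumes "L n = 0" "j < d"
  shows "ladder_at j n = 0"
proof -
  have "\<forall>i\<in>{..<d}. lam i ((n i + 1) div 2) = 0"
    using assms(1) sum_nonneg_eq_0_iff[of "{..<d}" "\<lambda>i. lam i ((n i + 1) div 2)"]
      a_le_lam a_nonneg order_trans unfolding lamD_def by blast
  then have "lam j ((n j + 1) div 2) = 0" using assms(2) by simp
  moreover have "a j \<le> lam j ((n j + 1) div 2)" "a j \<ge> 0"
    using a_le_lam[OF assms(2)] a_nonneg[OF assms(2)] by auto
  ultimately have "one_dim_system.gap (a j) (lam j) ((n j + 1) div 2) = 0"
    using one_dim_gap_eq[OF assms(2)] by simp
  then show ?thesis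
    unfolding ladder_at_def using one_dim_system.ladder_eq_0[OF one_dim[OF assms(2)]] by blast
qed

lemma ip_PhiD:
  assumes "n \<in> Nd d" "m \<in> Nd d"
  shows "integrable (muD c d w) (\<lambda>x. PhD n x * PhD m x)"
    and "ip (muD c d w) (PhD n) (PhD m) = (if n = m then 1 else 0)"
proof -
  have prod_eq: "PhD n x * PhD m x = (\<Prod>i<d. Ph1 i (n i) (x i) * Ph1 i (m i) (x i))" for x
    by (simp add: PhiD_def prod.distrib)
  note one = one_dim_system.continuous_on_evenext_W[OF one_dim]
    one_dim_system.evenext_W_pos[OF one_dim, THEN less_imp_le]
    continuous_on_mult[OF one_dim_system.continuous_on_Phi1[OF one_dim] one_dim_system.continuous_on_Phi1[OF one_dim]]
    one_dim_system.Phi1_orthonormal(1)[OF one_dim, simplified mult.assoc]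
  show "integrable (muD c d w) (\<lambda>x. PhD n x * PhD m x)"
    unfolding prod_eq by (rule integral_muD_prod(1)) (use one in \<open>auto simp: mult.assoc\<close>)
  have "ip (muD c d w) (PhD n) (PhD m) = (\<Prod>i<d. if n i = m i then 1 else 0)"
    unfolding ip_def prod_eq
    by (subst integral_muD_prod(2))
       (use one one_dim_system.Phi1_orthonormal(2)[OF one_dim] in \<open>auto simp: mult.assoc intro!: prod.cong\<close>)
  also have "\<dots> = (if n = m then 1 else 0)"
  proof (cases "n = m")
    case False
    then obtain i where "n i \<noteq> m i" by auto
    moreover have "i < d"
    proof (rule ccontr)
      assume "\<not> i < d"
      with assms have "n i = m i" by (auto simp: Nd_def PiE_def extensional_def)
      with \<open>n i \<noteq> m i\<close> show False by simp
    qed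
    ultimately show ?thesis using False by (intro trans[OF prod_zero]) auto
  qed simp
  finally show "ip (muD c d w) (PhD n) (PhD m) = (if n = m then 1 else 0)" .
qed

lemma PhiD_upd: "j < d \<Longrightarrow> PhD n (x(j := s)) = Ph1 j (n j) s * (\<Prod>i\<in>{..<d}-{j}. Ph1 i (n i) (x i))"
  unfolding PhiD_def by (subst prod.remove[of _ j]) (auto intro!: prod.cong)

lemma Xd_upd: "x \<in> Xd c d \<Longrightarrow> s \<in> Xsym c \<Longrightarrow> j < d \<Longrightarrow> x(j := s) \<in> Xd c d"
  by (auto simp: Xd_def PiE_def extensional_def)

text \<open>\<open>D\<^sub>j\<close> only sees the \<open>j\<close>-th factor of each tensor product.\<close>

lemma DD_expansion:
  assumes G: "finite G" and x: "x \<in> Xd c d" and j: "j < d"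
    and g: "\<And>y. y \<in> Xd c d \<Longrightarrow> g y = (\<Sum>k\<in>G. b k * PhD (h k) y)"
  shows "DD w p q j g x = (\<Sum>k\<in>G. b k * (ladder_at j (h k) * PhD (twin_at j (h k)) x))"
proof -
  define C where "C k = (\<Prod>i\<in>{..<d}-{j}. Ph1 i (h k i) (x i))" for k
  have xj: "x j \<in> Xsym c" using x j by (auto simp: Xd_def)
  have "DD w p q j g x = D1 (w j) (p j) (q j) (\<lambda>s. g (x(j := s))) (x j)" by (rule DD_eq_D1)
  also have "\<dots> = D1 (w j) (p j) (q j) (\<lambda>s. \<Sum>k\<in>G. (b k * C k) * Ph1 j (h k j) s) (x j)"
  proof (rule D1_cong[OF open_Xsym xj])
    show "- x j \<in> Xsym c" using xj by simp
    fix s assume "s \<in> Xsym c"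
    then show "g (x(j := s)) = (\<Sum>k\<in>G. (b k * C k) * Ph1 j (h k j) s)"
      using g[OF Xd_upd[OF x _ j]] by (simp add: PhiD_upd[OF j] C_def mult_ac)
  qed
  also have "\<dots> = (\<Sum>k\<in>G. (b k * C k) * D1 (w j) (p j) (q j) (Ph1 j (h k j)) (x j))"
    by (rule D1_sum[OF G one_dim_system.Phi1_differentiable[OF one_dim[OF j] xj]])
  also have "\<dots> = (\<Sum>k\<in>G. b k * (ladder_at j (h k) * PhD (twin_at j (h k)) x))"
  proof (rule sum.cong[OF refl])
    fix k
    have "PhD (twin_at j (h k)) x = Ph1 j (twin (h k j)) (x j) * C k"
      using PhiD_upd[OF j, of "twin_at j (h k)" x "x j"] by (simp add: C_def twin_at_def)
    then show "(b k * C k) * D1 (w j) (p j) (q j) (Ph1 j (h k j)) (x j)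
        = b k * (ladder_at j (h k) * PhD (twin_at j (h k)) x)"
      by (simp add: one_dim_system.D1_Phi1[OF one_dim[OF j] xj] ladder_at_def)
  qed
  finally show ?thesis .
qed

lemma DD_PhiD: "x \<in> Xd c d \<Longrightarrow> j < d \<Longrightarrow> DD w p q j (PhD n) x = ladder_at j n * PhD (twin_at j n) x"
  using DD_expansion[of "{n}" x j "PhD n" "\<lambda>_. 1" id] by simp

lemma DD_DD_expansion:
  assumes G: "finite G" and x: "x \<in> Xd c d" and i: "i < d"
    and g: "\<And>y. y \<in> Xd c d \<Longrightarrow> g y = (\<Sum>k\<in>G. b k * PhD (h k) y)"
  shows "DD w p q i (DD w p q i g) x
       = (\<Sum>k\<in>G. b k * (ladder_at i (h k) * ladder_at i (twin_at i (h k))) * PhD (h k) x)"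
proof -
  have "DD w p q i g y = (\<Sum>k\<in>G. (b k * ladder_at i (h k)) * PhD (twin_at i (h k)) y)"
    if "y \<in> Xd c d" for y
    using DD_expansion[OF G that i g] by (simp add: mult.assoc)
  from DD_expansion[OF G x i this] show ?thesis by (simp add: mult_ac)
qed

lemma coef_expansion:
  assumes G: "finite G" and hG: "\<And>k. k \<in> G \<Longrightarrow> h k \<in> Nd d"
    and g: "\<And>y. y \<in> Xd c d \<Longrightarrow> g y = (\<Sum>k\<in>G. b k * PhD (h k) y)" and m: "m \<in> Nd d"
  shows "coef (muD c d w) (PhiD d p q a phi lam) g m = (\<Sum>k\<in>G. if h k = m then b k else 0)"
proof -
  have "coef (muD c d w) (PhiD d p q a phi lam) g m
      = (\<integral>x. (\<Sum>k\<in>G. b k * (PhD (h k) x * PhD m x)) \<partial>muD c d w)"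
    unfolding coef_def ip_def
    by (rule Bochner_Integration.integral_cong) (auto simp: space_muD g sum_distrib_right mult.assoc)
  also have "\<dots> = (\<Sum>k\<in>G. b k * ip (muD c d w) (PhD (h k)) (PhD m))"
    unfolding ip_def by (subst Bochner_Integration.integral_sum) (auto intro!: ip_PhiD(1)[OF hG m])
  also have "\<dots> = (\<Sum>k\<in>G. if h k = m then b k else 0)"
    by (intro sum.cong refl) (simp add: ip_PhiD(2)[OF hG m])
  finally show ?thesis .
qed

lemma infsum_coef_expansion:
  assumes G: "finite G" and hG: "\<And>k. k \<in> G \<Longrightarrow> h k \<in> Nd d"
    and g: "\<And>y. y \<in> Xd c d \<Longrightarrow> g y = (\<Sum>k\<in>G. b k * PhD (h k) y)" and N: "N \<subseteq> Nd d"
  shows "(\<Sum>\<^sub>\<infinity>n\<in>N. u n * coef (muD c d w) (PhiD d p q a phi lam) g n)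
       = (\<Sum>k\<in>G. if h k \<in> N then b k * u (h k) else 0)"
proof -
  have "(\<Sum>\<^sub>\<infinity>n\<in>N. u n * coef (muD c d w) (PhiD d p q a phi lam) g n)
      = (\<Sum>\<^sub>\<infinity>n\<in>N. u n * (\<Sum>k\<in>G. if h k = n then b k else 0))"
    using N by (intro infsum_cong) (auto simp: coef_expansion[OF G hG g])
  also have "\<dots> = (\<Sum>k\<in>G. if h k \<in> N then b k * u (h k) else 0)"
    by (rule infsum_mult_finite_coeffs[OF G])
  finally show ?thesis .
qed

lemma Pop_expansion:
  assumes G: "finite G" and hG: "\<And>k. k \<in> G \<Longrightarrow> h k \<in> Nd d"
    and g: "\<And>y. y \<in> Xd c d \<Longrightarrow> g y = (\<Sum>k\<in>G. b k * PhD (h k) y)"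
  shows "Pop (muD c d w) (Nd d) (PhiD d p q a phi lam) L t g x
       = (\<Sum>k\<in>G. b k * (exp (- t * sqrt (L (h k))) * PhD (h k) x))"
  using infsum_coef_expansion[OF G hG g order_refl, of "\<lambda>n. exp (- t * sqrt (L n)) * PhD n x"] hG
  unfolding Pop_def by (simp add: mult_ac)

lemma Rop_expansion:
  assumes G: "finite G" and hG: "\<And>k. k \<in> G \<Longrightarrow> h k \<in> Nd d"
    and g: "\<And>y. y \<in> Xd c d \<Longrightarrow> g y = (\<Sum>k\<in>G. b k * PhD (h k) y)"
  shows "Rop (muD c d w) (Nd d) (PhiD d p q a phi lam) L D g x
       = (\<Sum>k\<in>G. if L (h k) \<noteq> 0 then b k * (L (h k) powr (-1/2) * D (PhD (h k)) x) else 0)"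
  using infsum_coef_expansion[OF G hG g, of "{n \<in> Nd d. L n \<noteq> 0}" "\<lambda>n. L n powr (-1/2) * D (PhD n) x"] hG
  unfolding Rop_def by (simp add: mult_ac)

lemma LinvPi_expansion:
  assumes G: "finite G" and hG: "\<And>k. k \<in> G \<Longrightarrow> h k \<in> Nd d"
    and g: "\<And>y. y \<in> Xd c d \<Longrightarrow> g y = (\<Sum>k\<in>G. b k * PhD (h k) y)"
  shows "LinvPi (muD c d w) (Nd d) (PhiD d p q a phi lam) L g x
       = (\<Sum>k\<in>G. if L (h k) \<noteq> 0 then b k * (1 / L (h k) * PhD (h k) x) else 0)"
  using infsum_coef_expansion[OF G hG g, of "{n \<in> Nd d. L n \<noteq> 0}" "\<lambda>n. 1 / L n * PhD n x"] hG
  unfolding LinvPi_def by (simp add: mult_ac)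

lemma has_real_derivative_semigroup_expansion:
  "((\<lambda>s. \<Sum>k\<in>G. \<beta> k * (exp (- s * sqrt (L (h k))) * PhD (h k) x)) has_real_derivative
      (\<Sum>k\<in>G. \<beta> k * (- sqrt (L (h k)) * exp (- t * sqrt (L (h k))) * PhD (h k) x))) (at t)"
  by (intro DERIV_sum DERIV_cmult DERIV_cmult_right) (auto intro!: derivative_eq_intros)

text \<open>Each \<open>e\<^sup>-\<^sup>s\<^sup>\<surd>\<^sup>\<lambda> \<Phi>\<^sub>n\<close> solves \<open>\<partial>\<^sub>s\<^sup>2 u = \<lambda> u = \<LL> u\<close>, since
  \<open>\<LL> \<Phi>\<^sub>n = (A - \<Sum>\<^sub>j ladder_at j n * ladder_at j (twin_at j n)) \<Phi>\<^sub>n = \<lambda>\<^sub>n \<Phi>\<^sub>n\<close>.\<close>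

lemma semigroup_expansion_wave:
  fixes \<beta> :: "'k \<Rightarrow> real" and h :: "'k \<Rightarrow> nat \<Rightarrow> nat"
  assumes G: "finite G" and x: "x \<in> Xd c d"
  defines "V \<equiv> \<lambda>s y. \<Sum>k\<in>G. \<beta> k * (exp (- s * sqrt (L (h k))) * PhD (h k) y)"
  shows "((\<lambda>s. V s x) has_real_derivative deriv (\<lambda>s. V s x) t) (at t)"
    and "(deriv (\<lambda>s. V s x) has_real_derivative LLop d w p q A (V t) x) (at t)"
proof -
  define V1 where "V1 s = (\<Sum>k\<in>G. \<beta> k * (- sqrt (L (h k)) * exp (- s * sqrt (L (h k))) * PhD (h k) x))" for s
  have dV: "deriv (\<lambda>s. V s x) = V1"
    using has_real_derivative_semigroup_expansion DERIV_imp_deriv unfolding V_def V1_def by blast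
  then show "((\<lambda>s. V s x) has_real_derivative deriv (\<lambda>s. V s x) t) (at t)"
    using has_real_derivative_semigroup_expansion unfolding V_def V1_def by simp
  have "(V1 has_real_derivative (\<Sum>k\<in>G. \<beta> k * L (h k) * exp (- t * sqrt (L (h k))) * PhD (h k) x)) (at t)"
  proof -
    have "(V1 has_real_derivative (\<Sum>k\<in>G. \<beta> k * (- sqrt (L (h k)) * (- sqrt (L (h k))
            * exp (- t * sqrt (L (h k)))) * PhD (h k) x))) (at t)"
      unfolding V1_def by (intro DERIV_sum DERIV_cmult DERIV_cmult_right) (auto intro!: derivative_eq_intros)
    moreover have "- sqrt (L n) * (- sqrt (L n) * z) = L n * z" for n z
      using lamD_nonneg[of n] by (simp add: mult.assoc[symmetric])
    ultimately show ?thesis by (simp only: mult.assoc)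
  qed
  moreover have "LLop d w p q A (V t) x
      = (\<Sum>k\<in>G. \<beta> k * L (h k) * exp (- t * sqrt (L (h k))) * PhD (h k) x)"
  proof -
    have Vt: "V t y = (\<Sum>k\<in>G. (\<beta> k * exp (- t * sqrt (L (h k)))) * PhD (h k) y)" for y
      unfolding V_def by (simp add: mult.assoc)
    have "LLop d w p q A (V t) x = A * V t x - (\<Sum>i<d. \<Sum>k\<in>G. (\<beta> k * exp (- t * sqrt (L (h k))))
          * (ladder_at i (h k) * ladder_at i (twin_at i (h k))) * PhD (h k) x)"
      unfolding LLop_def by (intro arg_cong2[where f="(-)"] refl sum.cong) (auto intro!: DD_DD_expansion[OF G x] simp: Vt)
    also have "\<dots> = (\<Sum>k\<in>G. (\<beta> k * exp (- t * sqrt (L (h k)))) * PhD (h k) x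
          * (A - (\<Sum>i<d. ladder_at i (h k) * ladder_at i (twin_at i (h k)))))"
      unfolding V_def by (subst sum.swap) (simp add: sum_distrib_left sum_distrib_right sum_subtractf[symmetric] algebra_simps)
    finally show ?thesis
      by (simp add: sum_ladder_twin_at mult_ac)
  qed
  ultimately show "(deriv (\<lambda>s. V s x) has_real_derivative LLop d w p q A (V t) x) (at t)"
    using dV by simp
qed

end

section \<open>Finite expansions\<close>

locale finite_expansion = multi_dim_system +
  fixes F :: "(nat \<Rightarrow> nat) set" and cf :: "(nat \<Rightarrow> nat) \<Rightarrow> real" and f :: "(nat \<Rightarrow> real) \<Rightarrow> real"
  assumes finite_F: "finite F" and F_Nd: "F \<subseteq> Nd d"
    and f_eq: "\<And>y. y \<in> Xd c d \<Longrightarrow> f y = (\<Sum>n\<in>F. cf n * PhD n y)"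
begin

abbreviation E where "E t n \<equiv> exp (- t * sqrt (L n))"

definition riesz_coeff where
  "riesz_coeff j n = (if L n \<noteq> 0 then cf n * (L n powr (-1/2) * ladder_at j n) else 0)"

lemma in_Nd: "n \<in> F \<Longrightarrow> n \<in> Nd d"
  using F_Nd by auto

lemma PP_expansion: "PP c d w p q a phi lam t f x = (\<Sum>n\<in>F. cf n * (E t n * PhD n x))"
  using Pop_expansion[OF finite_F, where h="\<lambda>n. n"] in_Nd f_eq unfolding PP_def by blast

lemma RR_expansion:
  assumes "j < d" "y \<in> Xd c d"
  shows "RR c d w p q a phi lam j f y = (\<Sum>n\<in>F. riesz_coeff j n * PhD (twin_at j n) y)"
proof -
  have "RR c d w p q a phi lam j f y
      = (\<Sum>n\<in>F. if L n \<noteq> 0 then cf n * (L n powr (-1/2) * DD w p q j (PhD n) y) else 0)"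
    using Rop_expansion[OF finite_F, where h="\<lambda>n. n"] in_Nd f_eq unfolding RR_def by blast
  also have "\<dots> = (\<Sum>n\<in>F. riesz_coeff j n * PhD (twin_at j n) y)"
    by (intro sum.cong refl) (simp add: DD_PhiD[OF assms(2,1)] riesz_coeff_def)
  finally show ?thesis .
qed

lemma UU_expansion:
  assumes "j < d"
  shows "UU c d w p q a phi lam t j f x = (\<Sum>n\<in>F. riesz_coeff j n * (E t n * PhD (twin_at j n) x))"
  using Pop_expansion[OF finite_F, where h="twin_at j", OF twin_at_Nd[OF in_Nd assms] RR_expansion[OF assms]]
  unfolding UU_def PP_def by (simp add: lamD_twin_at)

lemma DD_UU:
  assumes "i < d" "j < d" "x \<in> Xd c d"
  shows "DD w p q i (UU c d w p q a phi lam t j f) x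
       = (\<Sum>n\<in>F. (riesz_coeff j n * E t n) * (ladder_at i (twin_at j n) * PhD (twin_at i (twin_at j n)) x))"
  by (rule DD_expansion[OF finite_F assms(3,1)]) (simp add: UU_expansion[OF assms(2)] mult.assoc)

text \<open>\<open>D\<^sub>i\<close> and \<open>D\<^sub>j\<close> act on different coordinates, so twinning commutes, and
  \<open>riesz_coeff j n * ladder_at i n\<close> is symmetric in \<open>i, j\<close>.\<close>

lemma DD_UU_commute:
  assumes "i < d" "j < d" "x \<in> Xd c d"
  shows "DD w p q i (UU c d w p q a phi lam t j f) x = DD w p q j (UU c d w p q a phi lam t i f) x"
proof (cases "i = j")
  case False
  have "ladder_at i (twin_at j n) = ladder_at i n" "ladder_at j (twin_at i n) = ladder_at j n"
    "twin_at i (twin_at j n) = twin_at j (twin_at i n)"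
    "riesz_coeff j n * ladder_at i n = riesz_coeff i n * ladder_at j n" for n
    using False by (auto simp: ladder_at_def twin_at_def riesz_coeff_def fun_upd_twist)
  then show ?thesis
    unfolding DD_UU[OF assms] DD_UU[OF assms(2,1,3)] by (intro sum.cong refl) (simp add: mult_ac)
qed simp

lemma UU_derivative:
  assumes "j < d" "x \<in> Xd c d"
  shows "((\<lambda>s. UU c d w p q a phi lam s j f x) has_real_derivative
            - DD w p q j (PP c d w p q a phi lam t f) x) (at t)"
proof -
  have DP: "DD w p q j (PP c d w p q a phi lam t f) x
      = (\<Sum>n\<in>F. (cf n * E t n) * (ladder_at j n * PhD (twin_at j n) x))"
    by (rule DD_expansion[OF finite_F assms(2,1)]) (simp add: PP_expansion mult.assoc)
  have "riesz_coeff j n * (- sqrt (L n) * E t n * PhD (twin_at j n) x)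
      = - ((cf n * E t n) * (ladder_at j n * PhD (twin_at j n) x))" for n
  proof (cases "L n = 0")
    case True
    then show ?thesis using ladder_at_eq_0[OF True assms(1)] by (simp add: riesz_coeff_def)
  next
    case False
    then have "L n > 0" using lamD_nonneg[of n] by linarith
    then show ?thesis using False by (simp add: riesz_coeff_def powr_neg_half)
  qed
  then have sum_eq: "(\<Sum>n\<in>F. riesz_coeff j n * (- sqrt (L n) * E t n * PhD (twin_at j n) x))
      = - DD w p q j (PP c d w p q a phi lam t f) x"
    unfolding DP sum_negf[symmetric] by (rule sum.cong[OF refl])
  have UU_eq: "(\<lambda>s. UU c d w p q a phi lam s j f x)
      = (\<lambda>s. \<Sum>n\<in>F. riesz_coeff j n * (E s n * PhD (twin_at j n) x))"
    using UU_expansion[OF assms(1)] by auto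
  show ?thesis
    unfolding UU_eq sum_eq[symmetric]
    by (rule has_real_derivative_semigroup_expansion[where h="twin_at j", unfolded lamD_twin_at])
qed

lemma sum_DD_UU:
  assumes "x \<in> Xd c d"
  shows "(\<Sum>j<d. DD w p q j (UU c d w p q a phi lam t j f) x)
       = (\<Sum>n\<in>F. (if L n \<noteq> 0 then cf n * L n powr (-1/2) * (A - L n) else 0) * E t n * PhD n x)"
proof -
  have "(\<Sum>j<d. DD w p q j (UU c d w p q a phi lam t j f) x)
      = (\<Sum>j<d. \<Sum>n\<in>F. riesz_coeff j n * ladder_at j (twin_at j n) * (E t n * PhD n x))"
    by (intro sum.cong refl) (simp add: DD_UU[OF _ _ assms] mult_ac)
  also have "\<dots> = (\<Sum>n\<in>F. (\<Sum>j<d. riesz_coeff j n * ladder_at j (twin_at j n)) * E t n * PhD n x)"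
    by (subst sum.swap) (simp add: sum_distrib_right mult.assoc)
  also have "\<dots> = (\<Sum>n\<in>F. (if L n \<noteq> 0 then cf n * L n powr (-1/2) * (A - L n) else 0) * E t n * PhD n x)"
  proof (intro sum.cong refl)
    fix n
    have "(\<Sum>j<d. riesz_coeff j n * ladder_at j (twin_at j n))
        = (if L n \<noteq> 0 then cf n * L n powr (-1/2) * (\<Sum>j<d. ladder_at j n * ladder_at j (twin_at j n)) else 0)"
      by (simp add: riesz_coeff_def sum_distrib_left mult_ac)
    then show "(\<Sum>j<d. riesz_coeff j n * ladder_at j (twin_at j n)) * E t n * PhD n x
        = (if L n \<noteq> 0 then cf n * L n powr (-1/2) * (A - L n) else 0) * E t n * PhD n x"
      by (simp add: sum_ladder_twin_at)
  qed
  finally show ?thesis .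
qed

lemma PP_derivative_eq_sum_DD_UU:
  assumes A0: "A = 0" and x: "x \<in> Xd c d"
  shows "((\<lambda>s. PP c d w p q a phi lam s f x) has_real_derivative
            (\<Sum>j<d. DD w p q j (UU c d w p q a phi lam t j f) x)) (at t)"
proof -
  have "cf n * (- sqrt (L n) * E t n * PhD n x)
      = (if L n \<noteq> 0 then cf n * L n powr (-1/2) * (A - L n) else 0) * E t n * PhD n x" for n
  proof (cases "L n = 0")
    case False
    then have "L n > 0" using lamD_nonneg[of n] by linarith
    then have "L n powr (-1/2) * (A - L n) = - sqrt (L n)"
      using A0 by (simp add: powr_neg_half real_div_sqrt)
    then show ?thesis using False by (simp add: mult.assoc)
  qed simp
  then have sum_eq: "(\<Sum>n\<in>F. cf n * (- sqrt (L n) * E t n * PhD n x))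
      = (\<Sum>j<d. DD w p q j (UU c d w p q a phi lam t j f) x)"
    unfolding sum_DD_UU[OF x] by (rule sum.cong[OF refl])
  show ?thesis
    unfolding PP_expansion sum_eq[symmetric] by (rule has_real_derivative_semigroup_expansion[where h="\<lambda>n. n"])
qed

text \<open>For \<open>A > 0\<close> every \<open>\<lambda>\<^sub>n \<ge> A\<close> is positive, so \<open>\<LL>\<^sup>-\<^sup>1\<Pi>\<^sub>0\<close> simply divides each coefficient by \<open>\<lambda>\<^sub>n\<close>.\<close>

lemma PP_corrected_derivative_eq_sum_DD_UU:
  assumes A_pos: "A > 0" and x: "x \<in> Xd c d"
  shows "((\<lambda>s. PP c d w p q a phi lam s (\<lambda>y. f y - A * LinvPi0 c d w p q a phi lam f y) x)
            has_real_derivative (\<Sum>j<d. DD w p q j (UU c d w p q a phi lam t j f) x)) (at t)"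
proof -
  have L_pos: "L n > 0" for n using A_le_lamD[of n] A_pos by linarith
  define \<beta> where "\<beta> n = cf n - A * (cf n / L n)" for n
  have Linv: "LinvPi0 c d w p q a phi lam f y = (\<Sum>n\<in>F. cf n / L n * PhD n y)" for y
    using LinvPi_expansion[OF finite_F, where h="\<lambda>n. n"] in_Nd f_eq L_pos
    unfolding LinvPi0_def by (simp add: less_imp_neq[symmetric])
  have corrected: "f y - A * LinvPi0 c d w p q a phi lam f y = (\<Sum>n\<in>F. \<beta> n * PhD n y)"
    if "y \<in> Xd c d" for y
  proof -
    have "f y - A * LinvPi0 c d w p q a phi lam f y = (\<Sum>n\<in>F. cf n * PhD n y - A * (cf n / L n * PhD n y))"
      by (simp only: f_eq[OF that] Linv sum_distrib_left sum_subtractf)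
    also have "\<dots> = (\<Sum>n\<in>F. \<beta> n * PhD n y)"
      by (simp only: \<beta>_def left_diff_distrib mult.assoc)
    finally show ?thesis .
  qed
  have P_eq: "(\<lambda>s. PP c d w p q a phi lam s (\<lambda>y. f y - A * LinvPi0 c d w p q a phi lam f y) x)
      = (\<lambda>s. \<Sum>n\<in>F. \<beta> n * (E s n * PhD n x))"
    unfolding PP_def using Pop_expansion[OF finite_F, where h="\<lambda>n. n", OF in_Nd corrected] by blast
  have "\<beta> n * (- sqrt (L n) * E t n * PhD n x)
      = (if L n \<noteq> 0 then cf n * L n powr (-1/2) * (A - L n) else 0) * E t n * PhD n x" for n
  proof -
    have "sqrt (L n) * sqrt (L n) = L n" using L_pos[of n] by simp
    then have "\<beta> n * (- sqrt (L n)) = cf n * (A - L n) / sqrt (L n)"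
      using L_pos[of n] by (simp add: \<beta>_def field_simps)
    then have coeff: "\<beta> n * (- sqrt (L n)) = cf n * L n powr (-1/2) * (A - L n)"
      using L_pos[of n] by (simp add: powr_neg_half)
    have "\<beta> n * (- sqrt (L n) * E t n * PhD n x) = (\<beta> n * (- sqrt (L n))) * E t n * PhD n x"
      by (simp only: mult.assoc)
    then show ?thesis unfolding coeff using L_pos[of n] by simp
  qed
  then have sum_eq: "(\<Sum>n\<in>F. \<beta> n * (- sqrt (L n) * E t n * PhD n x))
      = (\<Sum>j<d. DD w p q j (UU c d w p q a phi lam t j f) x)"
    unfolding sum_DD_UU[OF x] by (rule sum.cong[OF refl])
  show ?thesis
    unfolding P_eq sum_eq[symmetric] by (rule has_real_derivative_semigroup_expansion[where h="\<lambda>n. n"])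
qed

lemma PP_wave:
  assumes "x \<in> Xd c d"
  shows "((\<lambda>s. PP c d w p q a phi lam s f x) has_real_derivative deriv (\<lambda>s. PP c d w p q a phi lam s f x) t) (at t)
      \<and> (deriv (\<lambda>s. PP c d w p q a phi lam s f x) has_real_derivative
            LLop d w p q A (PP c d w p q a phi lam t f) x) (at t)"
  using semigroup_expansion_wave[OF finite_F assms, where \<beta>=cf and h="\<lambda>n. n"]
  by (simp add: PP_expansion[abs_def])

lemma UU_wave:
  assumes "x \<in> Xd c d" "j < d"
  shows "((\<lambda>s. UU c d w p q a phi lam s j f x) has_real_derivative deriv (\<lambda>s. UU c d w p q a phi lam s j f x) t) (at t)
      \<and> (deriv (\<lambda>s. UU c d w p q a phi lam s j f x) has_real_derivative
            LLop d w p q A (UU c d w p q a phi lam t j f) x) (at t)"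
  using semigroup_expansion_wave[OF finite_F assms(1), where \<beta>="riesz_coeff j" and h="twin_at j"]
  by (simp add: UU_expansion[OF assms(2), abs_def] lamD_twin_at)

end

theorem mainTheorem8:
  fixes d :: nat and c :: ereal
    and w p q :: "nat \<Rightarrow> real \<Rightarrow> real" and a :: "nat \<Rightarrow> real"
    and phi :: "nat \<Rightarrow> nat \<Rightarrow> real \<Rightarrow> real" and lam :: "nat \<Rightarrow> nat \<Rightarrow> real"
    and f :: "(nat \<Rightarrow> real) \<Rightarrow> real" and A :: real
  assumes d_pos: "d \<ge> 1" and c_pos: "c > 0"
    and w_reg: "\<forall>i<d. C2_on (Xint c) (w i) \<and> (\<forall>x\<in>Xint c. w i x > 0)"
    and p_reg: "\<forall>i<d. C2_on (Xint c) (p i) \<and> (\<forall>x\<in>Xint c. p i x \<noteq> 0)"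
    and q_reg: "\<forall>i<d. C1_on (Xint c) (q i)"
    and a_nonneg: "\<forall>i<d. a i \<ge> 0"
    and A_def: "A = (\<Sum>i<d. a i)"
    and onb: "\<forall>i<d. ONB (mu1 c (w i)) (phi i)"
    and smooth: "\<forall>i<d. \<forall>k. Cinf_on (Xint c) (phi i k)"
    and eigen: "\<forall>i<d. \<forall>k. \<forall>x\<in>Xint c. Lop (w i) (p i) (q i) (a i) (phi i k) x = lam i k * phi i k x"
    and lam_mono: "\<forall>i<d. strict_mono (lam i) \<and> filterlim (lam i) at_top sequentially"
    and delta_L2: "\<forall>i<d. \<forall>k. L2 (mu1 c (w i)) (delta (p i) (q i) (phi i k))"
    and green: "\<forall>i<d. \<forall>k m.
        ip (mu1 c (w i)) (delta (p i) (q i) (phi i k)) (delta (p i) (q i) (phi i m))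
      = ip (mu1 c (w i)) (deltastar (w i) (p i) (q i) (delta (p i) (q i) (phi i k))) (phi i m)"
    and a_lam0: "\<forall>i<d. a i = lam i 0"
    and f_span: "\<exists>F cf. finite F \<and> F \<subseteq> Nd d \<and>
        (\<forall>x\<in>Xd c d. f x = (\<Sum>n\<in>F. cf n * PhiD d p q a phi lam n x))"
  shows
    \<comment> \<open>(i)\<close>
    "(\<forall>t\<ge>0. \<forall>x\<in>Xd c d. \<forall>i<d. \<forall>j<d.
        DD w p q i (UU c d w p q a phi lam t j f) x = DD w p q j (UU c d w p q a phi lam t i f) x)
    \<comment> \<open>(ii)\<close>
     \<and> (\<forall>t>0. \<forall>x\<in>Xd c d. \<forall>j<d.
        ((\<lambda>s. UU c d w p q a phi lam s j f x) has_real_derivative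
            - DD w p q j (PP c d w p q a phi lam t f) x) (at t))
    \<comment> \<open>(iii)\<close>
     \<and> (A = 0 \<longrightarrow> (\<forall>t>0. \<forall>x\<in>Xd c d.
        ((\<lambda>s. PP c d w p q a phi lam s f x) has_real_derivative
            (\<Sum>j<d. DD w p q j (UU c d w p q a phi lam t j f) x)) (at t)))
     \<and> (A > 0 \<longrightarrow> (\<forall>t>0. \<forall>x\<in>Xd c d.
        ((\<lambda>s. PP c d w p q a phi lam s (\<lambda>y. f y - A * LinvPi0 c d w p q a phi lam f y) x)
            has_real_derivative (\<Sum>j<d. DD w p q j (UU c d w p q a phi lam t j f) x)) (at t)))
    \<comment> \<open>(iv)\<close>
     \<and> (\<forall>t>0. \<forall>x\<in>Xd c d.
        ((\<lambda>s. PP c d w p q a phi lam s f x) has_real_derivative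
            deriv (\<lambda>s. PP c d w p q a phi lam s f x) t) (at t)
      \<and> (deriv (\<lambda>s. PP c d w p q a phi lam s f x) has_real_derivative
            LLop d w p q A (PP c d w p q a phi lam t f) x) (at t))
     \<and> (\<forall>t>0. \<forall>x\<in>Xd c d. \<forall>j<d.
        ((\<lambda>s. UU c d w p q a phi lam s j f x) has_real_derivative
            deriv (\<lambda>s. UU c d w p q a phi lam s j f x) t) (at t)
      \<and> (deriv (\<lambda>s. UU c d w p q a phi lam s j f x) has_real_derivative
            LLop d w p q A (UU c d w p q a phi lam t j f) x) (at t))"
proof -
  \<comment> \<open>For \<open>f\<close> in the span all spectral series are finite sums.\<close>
  obtain F cf where F: "finite F" "F \<subseteq> Nd d" "\<forall>x\<in>Xd c d. f x = (\<Sum>n\<in>F. cf n * PhiD d p q a phi lam n x)"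
    using f_span by blast
  have "one_dim_system c (w i) (p i) (q i) (a i) (phi i) (lam i)" if "i < d" for i
    by (rule one_dim_system.intro)
       (use that w_reg p_reg q_reg onb smooth eigen lam_mono delta_L2 green a_lam0 in auto)
  then interpret finite_expansion d c w p q a phi lam F cf f
    using a_nonneg F
    by (intro finite_expansion.intro multi_dim_system.intro finite_expansion_axioms.intro) auto
  show ?thesis
    unfolding A_def
    using DD_UU_commute UU_derivative PP_derivative_eq_sum_DD_UU PP_corrected_derivative_eq_sum_DD_UU
      PP_wave UU_wave
    by blast
qed

end
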